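(* Let $(C_\bullet,\partial^C_\bullet)$ be a chain complex in which each $C_n$ is the free abelian group on a finite set $K_n$ (nonempty for only finitely many $n$), and $(G_\bullet,\partial^G_\bullet)$ a chain complex of finite abelian groups, with $\mathrm{hom}^p$, $\mathrm{hom}_p$, $d^p$, $d_p$, $\chi$, $\mathcal H$, $P^\alpha$, $Q_{\hat\beta}$ as in the context. For $\hat\rho\in\mathrm{hom}_{-1}$ and $\omega\in\mathrm{hom}^1$ define the fake-gauge and fake-holonomy operators on $\mathcal H$: $$A_{\hat\rho}=\frac{1}{|\mathrm{hom}^{-1}|}\sum_{\alpha\in\mathrm{hom}^{-1}}\overline{\chi_{\hat\rho}(\alpha)}\,P^{d^{-1}\alpha},\qquad B^{\omega}=\frac{1}{|\mathrm{hom}_{1}|}\sum_{\hat\beta\in\mathrm{hom}_{1}}\overline{\chi_{\hat\beta}(\omega)}\,Q_{d_1\hat\beta}.$$ Then for all $\hat\rho,\hat\rho'\in\mathrm{hom}_{-1}$ and $\omega,\omega'\in\mathrm{hom}^1$: (1) $A_{\hat\rho}B^\omega=B^\omega A_{\hat\rho}$; (2) $A_{\hat\rho}^\dagger=A_{\hat\rho}$ and $(B^\omega)^\dagger=B^\omega$; (3) $A_{\hat\rho}A_{\hat\rho'}=\delta(\hat\rho,\hat\rho')A_{\hat\rho'}$ and $B^\omega B^{\omega'}=\delta(\omega,\omega')B^{\omega'}$; (4) $\sum_{\hat\rho\in\mathrm{hom}_{-1}}A_{\hat\rho}=\mathbb 1_{\mathcal H}$ and $\sum_{\omega\in\mathrm{hom}^1}B^\omega=\mathbb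 1_{\mathcal H}$. In particular, the $A_{\hat\rho}$ and $B^\omega$ are mutually commuting orthogonal projectors.
   Context: $\mathrm{hom}^p=\bigoplus_n\mathrm{Hom}(C_n,G_{n-p})$, $\mathrm{hom}_p=\bigoplus_n\mathrm{Hom}(C_n,\hat G_{n-p})$ with $\hat G_m=\mathrm{Hom}(G_m,U(1))$, abelian groups under pointwise addition. The pairing $\chi_{\hat\rho}(\omega)=\prod_n\prod_{x\in K_n}\hat\rho_n(x)(\omega_n(x))\in U(1)$ for $\hat\rho\in\mathrm{hom}_p,\ \omega\in\mathrm{hom}^p$ is nondegenerate. $d^p:\mathrm{hom}^p\to\mathrm{hom}^{p+1}$ is $(d^p\omega)_n=\omega_{n-1}\circ\partial^C_n-(-1)^p\,\partial^G_{n-p}\circ\omega_n$, and $d_{p+1}:\mathrm{hom}_{p+1}\to\mathrm{hom}_p$ is the unique homomorphism with $\chi_{d_{p+1}\hat\nu}(\omega)=\chi_{\hat\nu}(d^p\omega)$. $\mathcal H$ is the Hilbert space with orthonormal basis $\{|\omega\rangle:\omega\in\mathrm{hom}^0\}$; $P^\alpha|\omega\rangle=|\omega+\alpha\rangle$ for $\alpha\in\mathrm{hom}^0$ and $Q_{\hat\beta}|\omega\rangle=\chi_{\hat\beta}(\omega)|\omega\rangle$ for $\hat\beta\in\mathrm{hom}_0$. $\delta$ is the Kronecker delta and $\dagger$ the Hilbert-space adjoint. *)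

theory Defs
  imports Complex_Main "HOL-Algebra.Algebra"
begin

text \<open>The chain complex C is given by a family of finite bases K n (C_n is the free abelian
  group on K n) and integer boundary coefficients bC n x y, meaning
  boundary_n(x) = sum over y in K (n-1) of (bC n x y) y.
  The complex G is a family of finite commutative groups G n (HOL-Algebra, written
  multiplicatively) with boundary maps bG n : G n -> G (n-1).
  A homomorphism C_n -> G_m is identified with its values on the basis K n
  (universal property of the free abelian group); elements of hom^p are extensional
  families of such maps.\<close>

definition U1 :: "complex monoid" where
  "U1 = \<lparr>carrier = {z. cmod z = 1}, monoid.mult = (*), one = 1\<rparr>"

definition characters :: "('g, 'm) monoid_scheme \<Rightarrow> ('g \<Rightarrow> complex) set" where
  "characters H = {f. f \<in> hom H U1 \<and> f \<in> extensional (carrier H)}"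

definition cochains :: "(int \<Rightarrow> 'k set) \<Rightarrow> (int \<Rightarrow> ('g, 'm) monoid_scheme) \<Rightarrow> int
    \<Rightarrow> (int \<Rightarrow> 'k \<Rightarrow> 'g) set" where
  "cochains K G p = {\<omega>. \<forall>n. \<omega> n \<in> (\<Pi>\<^sub>E x\<in>K n. carrier (G (n - p)))}"

definition hom_low :: "(int \<Rightarrow> 'k set) \<Rightarrow> (int \<Rightarrow> ('g, 'm) monoid_scheme) \<Rightarrow> int
    \<Rightarrow> (int \<Rightarrow> 'k \<Rightarrow> 'g \<Rightarrow> complex) set" where
  "hom_low K G p = {\<rho>. \<forall>n. \<rho> n \<in> (\<Pi>\<^sub>E x\<in>K n. characters (G (n - p)))}"

definition cochain_add :: "(int \<Rightarrow> 'k set) \<Rightarrow> (int \<Rightarrow> ('g, 'm) monoid_scheme) \<Rightarrow> int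
    \<Rightarrow> (int \<Rightarrow> 'k \<Rightarrow> 'g) \<Rightarrow> (int \<Rightarrow> 'k \<Rightarrow> 'g) \<Rightarrow> (int \<Rightarrow> 'k \<Rightarrow> 'g)" where
  "cochain_add K G p \<omega> \<alpha> = (\<lambda>n. \<lambda>x\<in>K n. \<omega> n x \<otimes>\<^bsub>G (n - p)\<^esub> \<alpha> n x)"

definition pairing :: "(int \<Rightarrow> 'k set) \<Rightarrow> (int \<Rightarrow> 'k \<Rightarrow> 'g \<Rightarrow> complex)
    \<Rightarrow> (int \<Rightarrow> 'k \<Rightarrow> 'g) \<Rightarrow> complex" where
  "pairing K \<rho> \<omega> = (\<Prod>n\<in>{n. K n \<noteq> {}}. \<Prod>x\<in>K n. \<rho> n x (\<omega> n x))"

text \<open>Coboundary d^p : hom^p -> hom^(p+1):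
  (d^p w)_n = w_(n-1) o bdC_n - (-1)^p bdG_(n-p) o w_n, evaluated on a basis element x,
  in multiplicative notation; the coefficient -(-1)^p is -1 for even p and 1 for odd p.\<close>
definition cobdry :: "(int \<Rightarrow> 'k set) \<Rightarrow> (int \<Rightarrow> 'k \<Rightarrow> 'k \<Rightarrow> int)
    \<Rightarrow> (int \<Rightarrow> ('g, 'm) monoid_scheme) \<Rightarrow> (int \<Rightarrow> 'g \<Rightarrow> 'g) \<Rightarrow> int
    \<Rightarrow> (int \<Rightarrow> 'k \<Rightarrow> 'g) \<Rightarrow> (int \<Rightarrow> 'k \<Rightarrow> 'g)" where
  "cobdry K bC G bG p \<omega> = (\<lambda>n. \<lambda>x\<in>K n.
      (finprod (G (n - (p + 1))) (\<lambda>y. \<omega> (n - 1) y [^]\<^bsub>G (n - (p + 1))\<^esub> bC n x y) (K (n - 1)))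
      \<otimes>\<^bsub>G (n - (p + 1))\<^esub>
      ((bG (n - p) (\<omega> n x)) [^]\<^bsub>G (n - (p + 1))\<^esub> (if even p then (-1::int) else 1)))"

text \<open>Boundary d_(p+1) : hom_(p+1) -> hom_p, the unique element with
  chi_(d nu)(w) = chi_nu(d^p w) for all w in hom^p.\<close>
definition bdry :: "(int \<Rightarrow> 'k set) \<Rightarrow> (int \<Rightarrow> 'k \<Rightarrow> 'k \<Rightarrow> int)
    \<Rightarrow> (int \<Rightarrow> ('g, 'm) monoid_scheme) \<Rightarrow> (int \<Rightarrow> 'g \<Rightarrow> 'g) \<Rightarrow> int
    \<Rightarrow> (int \<Rightarrow> 'k \<Rightarrow> 'g \<Rightarrow> complex) \<Rightarrow> (int \<Rightarrow> 'k \<Rightarrow> 'g \<Rightarrow> complex)" where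
  "bdry K bC G bG p \<nu> = (THE \<rho>. \<rho> \<in> hom_low K G p \<and>
      (\<forall>\<omega>\<in>cochains K G p. pairing K \<rho> \<omega> = pairing K \<nu> (cobdry K bC G bG p \<omega>)))"

text \<open>Operators on the finite-dimensional Hilbert space with orthonormal basis indexed by
  a finite set H are represented by their matrices M a b = <a|M|b>, vanishing outside H x H.\<close>

definition op_mult :: "'a set \<Rightarrow> ('a \<Rightarrow> 'a \<Rightarrow> complex) \<Rightarrow> ('a \<Rightarrow> 'a \<Rightarrow> complex)
    \<Rightarrow> ('a \<Rightarrow> 'a \<Rightarrow> complex)" where
  "op_mult H M N = (\<lambda>a c. \<Sum>b\<in>H. M a b * N b c)"

definition op_adj :: "('a \<Rightarrow> 'a \<Rightarrow> complex) \<Rightarrow> ('a \<Rightarrow> 'a \<Rightarrow> complex)" where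
  "op_adj M = (\<lambda>a b. cnj (M b a))"

definition op_id :: "'a set \<Rightarrow> ('a \<Rightarrow> 'a \<Rightarrow> complex)" where
  "op_id H = (\<lambda>a b. if a \<in> H \<and> a = b then 1 else 0)"

definition op_zero :: "'a \<Rightarrow> 'a \<Rightarrow> complex" where
  "op_zero = (\<lambda>a b. 0)"

definition shift_op :: "(int \<Rightarrow> 'k set) \<Rightarrow> (int \<Rightarrow> ('g, 'm) monoid_scheme)
    \<Rightarrow> (int \<Rightarrow> 'k \<Rightarrow> 'g) \<Rightarrow> ((int \<Rightarrow> 'k \<Rightarrow> 'g) \<Rightarrow> (int \<Rightarrow> 'k \<Rightarrow> 'g) \<Rightarrow> complex)" where
  "shift_op K G \<alpha> = (\<lambda>a b. if a \<in> cochains K G 0 \<and> b \<in> cochains K G 0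
       \<and> a = cochain_add K G 0 b \<alpha> then 1 else 0)"

definition clock_op :: "(int \<Rightarrow> 'k set) \<Rightarrow> (int \<Rightarrow> ('g, 'm) monoid_scheme)
    \<Rightarrow> (int \<Rightarrow> 'k \<Rightarrow> 'g \<Rightarrow> complex) \<Rightarrow> ((int \<Rightarrow> 'k \<Rightarrow> 'g) \<Rightarrow> (int \<Rightarrow> 'k \<Rightarrow> 'g) \<Rightarrow> complex)" where
  "clock_op K G \<beta> = (\<lambda>a b. if a \<in> cochains K G 0 \<and> a = b then pairing K \<beta> b else 0)"

definition gauge_op :: "(int \<Rightarrow> 'k set) \<Rightarrow> (int \<Rightarrow> 'k \<Rightarrow> 'k \<Rightarrow> int)
    \<Rightarrow> (int \<Rightarrow> ('g, 'm) monoid_scheme) \<Rightarrow> (int \<Rightarrow> 'g \<Rightarrow> 'g)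
    \<Rightarrow> (int \<Rightarrow> 'k \<Rightarrow> 'g \<Rightarrow> complex) \<Rightarrow> ((int \<Rightarrow> 'k \<Rightarrow> 'g) \<Rightarrow> (int \<Rightarrow> 'k \<Rightarrow> 'g) \<Rightarrow> complex)" where
  "gauge_op K bC G bG \<rho> = (\<lambda>a b. (1 / of_nat (card (cochains K G (-1)))) *
      (\<Sum>\<alpha>\<in>cochains K G (-1). cnj (pairing K \<rho> \<alpha>) *
           shift_op K G (cobdry K bC G bG (-1) \<alpha>) a b))"

definition flux_op :: "(int \<Rightarrow> 'k set) \<Rightarrow> (int \<Rightarrow> 'k \<Rightarrow> 'k \<Rightarrow> int)
    \<Rightarrow> (int \<Rightarrow> ('g, 'm) monoid_scheme) \<Rightarrow> (int \<Rightarrow> 'g \<Rightarrow> 'g)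
    \<Rightarrow> (int \<Rightarrow> 'k \<Rightarrow> 'g) \<Rightarrow> ((int \<Rightarrow> 'k \<Rightarrow> 'g) \<Rightarrow> (int \<Rightarrow> 'k \<Rightarrow> 'g) \<Rightarrow> complex)" where
  "flux_op K bC G bG \<omega> = (\<lambda>a b. (1 / of_nat (card (hom_low K G 1))) *
      (\<Sum>\<beta>\<in>hom_low K G 1. cnj (pairing K \<beta> \<omega>) *
           clock_op K G (bdry K bC G bG 0 \<beta>) a b))"

end

theory Submission
  imports Defs
begin

text \<open>The pairing \<open>\<chi>\<close> makes \<open>hom\<^sub>p\<close> the Pontryagin dual of \<open>hom\<^sup>p\<close>: it is a perfect pairing of
  finite abelian groups, because characters of a finite abelian group separate points (a character
  of a subgroup extends, one cyclic step at a time, to the whole group). By the orthogonality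
  relations, averaging \<open>Q\<^bsub>d\<^sub>1 \<beta>\<^esub>|a\<rangle> = \<chi>\<^sub>\<beta>(d\<^sup>0 a)|a\<rangle>\<close> turns \<open>B\<^sup>\<omega>\<close> into the diagonal projector
  onto the \<open>|a\<rangle>\<close> with \<open>d\<^sup>0 a = \<omega>\<close>, while \<open>A\<^sub>\<rho>\<close> is the isotypic projector of the
  representation \<open>\<alpha> \<mapsto> P\<^bsup>d \<alpha>\<^esup>\<close> of \<open>hom\<^sup>-\<^sup>1\<close>, i.e. \<open>P\<^bsup>d \<beta>\<^esup> A\<^sub>\<rho> = \<chi>\<^sub>\<rho>(\<beta>) A\<^sub>\<rho>\<close>.
  Since \<open>d\<^sup>0 \<circ> d\<^sup>-\<^sup>1 = 0\<close>, every shift \<open>P\<^bsup>d \<alpha>\<^esup>\<close> preserves \<open>d\<^sup>0\<close> and so commutes with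
  the \<open>B\<^sup>\<omega>\<close>.\<close>

section \<open>Characters of finite abelian groups\<close>

text \<open>Characters on a subset \<open>S\<close>; unlike \<open>characters\<close> they need not be extensional, so
  that they can be built up subgroup by subgroup.\<close>

definition char_on :: "('g, 'm) monoid_scheme \<Rightarrow> 'g set \<Rightarrow> ('g \<Rightarrow> complex) \<Rightarrow> bool" where
  "char_on H S f \<longleftrightarrow> (\<forall>x\<in>S. cmod (f x) = 1) \<and> (\<forall>x\<in>S. \<forall>y\<in>S. f (x \<otimes>\<^bsub>H\<^esub> y) = f x * f y)"

lemma cnj_mult_self_if_norm_1: "cmod z = 1 \<Longrightarrow> cnj z * z = 1"
  using complex_norm_square[of z] by (simp add: mult.commute)

lemma cnj_eq_inverse_if_norm_1: "cmod z = 1 \<Longrightarrow> cnj z = inverse z"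
  using cnj_mult_self_if_norm_1 inverse_unique by (metis mult.commute)

lemma exists_root_norm_1:
  assumes "0 < m" "cmod w = 1"
  obtains z where "cmod z = 1" "z ^ m = w"
proof
  have "w \<noteq> 0" using assms(2) by auto
  then have "w = cis (Arg w)" using cis_Arg[of w] assms(2) by (simp add: sgn_div_norm)
  then show "cis (Arg w / real m) ^ m = w" unfolding DeMoivre using assms(1) by simp
qed simp

context group
begin

lemma char_on_one:
  assumes "subgroup S G" "char_on G S f"
  shows "f \<one> = 1"
proof -
  have one: "\<one> \<in> S" by (rule subgroup.one_closed[OF assms(1)])
  then have "f (\<one> \<otimes> \<one>) = f \<one> * f \<one>" and norm: "cmod (f \<one>) = 1"
    using assms(2) unfolding char_on_def by blast+
  then have "f \<one> = f \<one> * f \<one>" by simp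
  moreover have "f \<one> \<noteq> 0" using norm by auto
  ultimately show ?thesis by simp
qed

lemma char_on_inv:
  assumes S: "subgroup S G" and f: "char_on G S f" and x: "x \<in> S"
  shows "f (inv x) = cnj (f x)"
proof -
  have "f x * f (inv x) = f (x \<otimes> inv x)"
    using f x subgroup.m_inv_closed[OF S x] unfolding char_on_def by simp
  also have "\<dots> = 1" using char_on_one[OF S f] subgroup.mem_carrier[OF S x] by simp
  moreover have "cnj (f x) = inverse (f x)"
    using cnj_eq_inverse_if_norm_1 f x unfolding char_on_def by blast
  ultimately show ?thesis using inverse_unique by metis
qed

lemma char_on_int_pow:
  assumes S: "subgroup S G" and f: "char_on G S f" and x: "x \<in> S"
  shows "f (x [^] (k::int)) = f x powi k"
proof -
  have pow_in_S: "x [^] (n::nat) \<in> S" for n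
    using subgroup_int_pow_closed[OF S x, of "int n"] by (simp add: int_pow_int)
  have nat_pow: "f (x [^] (n::nat)) = f x ^ n" for n
  proof (induction n)
    case 0
    show ?case using char_on_one[OF S f] by simp
  next
    case (Suc n)
    then show ?case using f x pow_in_S[of n] unfolding char_on_def by simp
  qed
  have norm_1: "cmod (f x ^ n) = 1" for n
    using f x unfolding char_on_def by (simp add: norm_power)
  show ?thesis
  proof (cases "k \<ge> 0")
    case True
    then obtain n where "k = int n" using nonneg_int_cases by blast
    then show ?thesis using nat_pow by (simp add: int_pow_int)
  next
    case False
    then obtain n where k: "k = - int n" by (intro that[of "nat (- k)"]) simp
    have "f (x [^] k) = f (inv (x [^] n))"
      unfolding k using subgroup.mem_carrier[OF S x] by (simp add: int_pow_neg_int)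
    also have "\<dots> = inverse (f x ^ n)"
      using char_on_inv[OF S f pow_in_S] nat_pow cnj_eq_inverse_if_norm_1[OF norm_1] by simp
    finally show ?thesis unfolding k power_int_minus by simp
  qed
qed

lemma least_pow_in_subgroup:
  assumes "finite (carrier G)" "subgroup S G" "g \<in> carrier G"
  obtains m :: nat where "0 < m" "g [^] m \<in> S" "\<And>j. 0 < j \<Longrightarrow> j < m \<Longrightarrow> g [^] j \<notin> S"
proof -
  let ?P = "\<lambda>m::nat. 0 < m \<and> g [^] m \<in> S"
  have "?P (ord g)"
    using ord_ge_1[OF assms(1,3)] pow_ord_eq_1[OF assms(3)] subgroup.one_closed[OF assms(2)] by simp
  then have "?P (Least ?P)" by (rule LeastI)
  moreover have "\<not> ?P j" if "j < Least ?P" for j using not_less_Least[OF that] .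
  ultimately show ?thesis using that by blast
qed

lemma dvd_if_int_pow_in_subgroup:
  assumes S: "subgroup S G" and g: "g \<in> carrier G"
    and m_pos: "0 < m" and m: "g [^] m \<in> S" and m_least: "\<And>j. 0 < j \<Longrightarrow> j < m \<Longrightarrow> g [^] j \<notin> S"
    and j: "g [^] (j::int) \<in> S"
  shows "int m dvd j"
proof -
  define q r where "q = j div int m" and "r = j mod int m"
  have j_eq: "j = int m * q + r" and r: "0 \<le> r" "r < int m"
    unfolding q_def r_def using m_pos by auto
  have mq: "g [^] (int m * q) \<in> S"
    using subgroup_int_pow_closed[OF S m, of q] int_pow_pow[OF g, of "int m" q] by (simp add: int_pow_int)
  have "g [^] r = inv (g [^] (int m * q)) \<otimes> g [^] j"
    unfolding j_eq using g by (simp add: int_pow_mult inv_solve_left)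
  then have "g [^] nat r \<in> S"
    using mq j r(1) subgroup.m_closed[OF S] subgroup.m_inv_closed[OF S] by (simp add: int_pow_int[symmetric])
  then have "r = 0" using m_least[of "nat r"] r by linarith
  then show ?thesis using j_eq by simp
qed

end

context comm_group
begin

lemma subgroup_adjoin:
  assumes S: "subgroup S G" and g: "g \<in> carrier G"
  shows "subgroup {s \<otimes> g [^] (k::int) | s k. s \<in> S} G" (is "subgroup ?T G")
proof (rule subgroupI)
  have S_carrier: "s \<in> carrier G" if "s \<in> S" for s using subgroup.mem_carrier[OF S that] .
  then show "?T \<subseteq> carrier G" using g by blast
  show "?T \<noteq> {}" using subgroup.one_closed[OF S] by blast
next
  fix a assume "a \<in> ?T"
  then obtain s and k :: int where a: "a = s \<otimes> g [^] k" and s: "s \<in> S" by blast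
  have "inv a = inv s \<otimes> g [^] (- k)"
    unfolding a using subgroup.mem_carrier[OF S s] g by (simp add: inv_mult int_pow_neg)
  then show "inv a \<in> ?T" using subgroup.m_inv_closed[OF S s] by blast
next
  fix a b assume "a \<in> ?T" "b \<in> ?T"
  then obtain s t and k l :: int where a: "a = s \<otimes> g [^] k" and s: "s \<in> S"
    and b: "b = t \<otimes> g [^] l" and t: "t \<in> S" by blast
  have "a \<otimes> b = (s \<otimes> t) \<otimes> (g [^] k \<otimes> g [^] l)"
    unfolding a b using subgroup.mem_carrier[OF S s] subgroup.mem_carrier[OF S t] g
    by (simp add: m_ac)
  also have "\<dots> = (s \<otimes> t) \<otimes> g [^] (k + l)" using g by (simp add: int_pow_mult)
  finally show "a \<otimes> b \<in> ?T" using subgroup.m_closed[OF S s t] by blast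
qed

lemma char_on_adjoin_consistent:
  assumes S: "subgroup S G" and f: "char_on G S f" and g: "g \<in> carrier G"
    and m_pos: "0 < m" and m: "g [^] m \<in> S" and m_least: "\<And>j. 0 < j \<Longrightarrow> j < m \<Longrightarrow> g [^] j \<notin> S"
    and z: "cmod z = 1" "z ^ m = f (g [^] m)"
    and s: "s \<in> S" and t: "t \<in> S" and eq: "s \<otimes> g [^] (k::int) = t \<otimes> g [^] (l::int)"
  shows "f s * z powi k = f t * z powi l"
proof -
  have s_in: "s \<in> carrier G" and t_in: "t \<in> carrier G"
    using subgroup.mem_carrier[OF S] s t by auto
  have "s \<otimes> g [^] (k - l) \<otimes> g [^] l = t \<otimes> g [^] l"
    using eq s_in g by (simp add: m_assoc int_pow_mult[symmetric])
  then have pow_eq: "g [^] (k - l) = inv s \<otimes> t"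
    using s_in t_in g by (simp add: r_cancel inv_solve_left)
  moreover have "inv s \<otimes> t \<in> S"
    using s t subgroup.m_closed[OF S] subgroup.m_inv_closed[OF S] by blast
  ultimately obtain q where q: "k - l = int m * q"
    using dvd_if_int_pow_in_subgroup[OF S g m_pos m m_least, of "k - l"] by auto
  have "z powi (k - l) = (z powi int m) powi q" unfolding q by (simp add: power_int_mult)
  also have "\<dots> = f ((g [^] m) [^] q)" using char_on_int_pow[OF S f m] z(2) by simp
  also have "\<dots> = f (inv s \<otimes> t)"
    using int_pow_pow[OF g, of "int m" q] pow_eq unfolding q by (simp add: int_pow_int)
  also have "\<dots> = cnj (f s) * f t"
    using f t subgroup.m_inv_closed[OF S s] char_on_inv[OF S f s] unfolding char_on_def by simp
  finally have "f s * z powi (k - l) = (cnj (f s) * f s) * f t" by (simp add: mult_ac)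
  also have "\<dots> = f t" using f s cnj_mult_self_if_norm_1 unfolding char_on_def by simp
  finally have "f s * z powi (k - l) * z powi l = f t * z powi l" by simp
  moreover have "z powi (k - l) * z powi l = z powi k"
    using power_int_add[of z "k - l" l] z(1) by (cases "z = 0") simp_all
  ultimately show ?thesis by (simp add: mult.assoc)
qed

text \<open>The extension is \<open>s \<otimes> g [^] k \<mapsto> f s * z powi k\<close>; it is well defined because \<open>z\<close> is an
  \<open>m\<close>-th root of \<open>f (g [^] m)\<close> and \<open>m\<close> is the order of \<open>g\<close> modulo \<open>S\<close>.\<close>

lemma char_on_adjoin:
  assumes S: "subgroup S G" and f: "char_on G S f" and g: "g \<in> carrier G"
    and m_pos: "0 < m" and m: "g [^] m \<in> S" and m_least: "\<And>j. 0 < j \<Longrightarrow> j < m \<Longrightarrow> g [^] j \<notin> S"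
    and z: "cmod z = 1" "z ^ m = f (g [^] m)"
  obtains f' where "char_on G {s \<otimes> g [^] (k::int) | s k. s \<in> S} f'"
    "\<And>s. s \<in> S \<Longrightarrow> f' s = f s" "f' g = z"
proof -
  let ?T = "{s \<otimes> g [^] (k::int) | s k. s \<in> S}"
  have S_carrier: "s \<in> carrier G" if "s \<in> S" for s using subgroup.mem_carrier[OF S that] .
  have "z \<noteq> 0" using z(1) by auto
  define rep where "rep x = (SOME p. fst p \<in> S \<and> x = fst p \<otimes> g [^] (snd p :: int))" for x
  define f' where "f' x = f (fst (rep x)) * z powi snd (rep x)" for x
  have f'_eq: "f' (s \<otimes> g [^] k) = f s * z powi k" if s: "s \<in> S" for s k
  proof -
    let ?p = "rep (s \<otimes> g [^] k)"
    have "fst ?p \<in> S \<and> s \<otimes> g [^] k = fst ?p \<otimes> g [^] snd ?p"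
      unfolding rep_def by (rule someI[of _ "(s, k)"]) (simp add: s)
    then show ?thesis
      unfolding f'_def using char_on_adjoin_consistent[OF assms s, of "fst ?p" k "snd ?p"] by simp
  qed
  have "char_on G ?T f'"
    unfolding char_on_def
  proof (intro conjI ballI)
    fix x assume "x \<in> ?T"
    then obtain s and k :: int where "x = s \<otimes> g [^] k" "s \<in> S" by blast
    then show "cmod (f' x) = 1"
      using f'_eq f z(1) unfolding char_on_def by (simp add: norm_mult norm_power_int)
  next
    fix x y assume "x \<in> ?T" "y \<in> ?T"
    then obtain s t and k l :: int where x: "x = s \<otimes> g [^] k" "s \<in> S" and y: "y = t \<otimes> g [^] l" "t \<in> S" by blast
    have "x \<otimes> y = (s \<otimes> t) \<otimes> (g [^] k \<otimes> g [^] l)"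
      unfolding x y using S_carrier[OF x(2)] S_carrier[OF y(2)] g by (simp add: m_ac)
    then have "x \<otimes> y = (s \<otimes> t) \<otimes> g [^] (k + l)" using g by (simp add: int_pow_mult)
    then have "f' (x \<otimes> y) = f (s \<otimes> t) * z powi (k + l)"
      using f'_eq subgroup.m_closed[OF S x(2) y(2)] by simp
    also have "\<dots> = f' x * f' y"
      using f x y f'_eq \<open>z \<noteq> 0\<close> unfolding char_on_def by (simp add: power_int_add)
    finally show "f' (x \<otimes> y) = f' x * f' y" .
  qed
  moreover have "f' s = f s" if "s \<in> S" for s
    using f'_eq[OF that, of 0] S_carrier[OF that] by simp
  moreover have "f' g = z"
    using f'_eq[OF subgroup.one_closed[OF S], of 1] char_on_one[OF S f] g by simp
  ultimately show ?thesis using that by blast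
qed

lemma char_on_extend:
  assumes fin: "finite (carrier G)"
  shows "subgroup S G \<Longrightarrow> char_on G S f \<Longrightarrow> \<exists>f'. char_on G (carrier G) f' \<and> (\<forall>s\<in>S. f' s = f s)"
proof (induction "card (carrier G - S)" arbitrary: S f rule: less_induct)
  case less
  note S = less.prems(1) and f = less.prems(2)
  show ?case
  proof (cases "S = carrier G")
    case True
    then show ?thesis using f by auto
  next
    case False
    then obtain g where g: "g \<in> carrier G" "g \<notin> S" using subgroup.subset[OF S] by blast
    obtain m :: nat where m: "0 < m" "g [^] m \<in> S" "\<And>j. 0 < j \<Longrightarrow> j < m \<Longrightarrow> g [^] j \<notin> S"
      using least_pow_in_subgroup[OF fin S g(1)] by blast
    have "cmod (f (g [^] m)) = 1" using f m(2) unfolding char_on_def by simp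
    then obtain z where z: "cmod z = 1" "z ^ m = f (g [^] m)"
      using exists_root_norm_1[OF m(1)] by blast
    define T where "T = {s \<otimes> g [^] (k::int) | s k. s \<in> S}"
    obtain f1 where f1: "char_on G T f1" "\<And>s. s \<in> S \<Longrightarrow> f1 s = f s"
      using char_on_adjoin[OF S f g(1) m z] unfolding T_def by blast
    have T: "subgroup T G" unfolding T_def by (rule subgroup_adjoin[OF S g(1)])
    have "g = \<one> \<otimes> g [^] (1::int)" using g(1) by simp
    then have "g \<in> T" unfolding T_def using subgroup.one_closed[OF S] by blast
    have S_T: "S \<subseteq> T"
    proof
      fix s assume "s \<in> S"
      moreover from this have "s = s \<otimes> g [^] (0::int)" using subgroup.mem_carrier[OF S] by simp
      ultimately show "s \<in> T" unfolding T_def by blast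
    qed
    have "carrier G - T \<subset> carrier G - S"
      using g \<open>g \<in> T\<close> S_T subgroup.subset[OF T] by blast
    then have "card (carrier G - T) < card (carrier G - S)" using fin by (meson finite_Diff psubset_card_mono)
    then obtain f2 where f2: "char_on G (carrier G) f2" "\<forall>s\<in>T. f2 s = f1 s"
      using less.hyps[OF _ T f1(1)] by blast
    have "f2 s = f s" if "s \<in> S" for s
      using f2(2) f1(2)[OF that] S_T that by auto
    then show ?thesis using f2(1) by blast
  qed
qed

text \<open>Extend the character of \<open>\<langle>h\<rangle>\<close> sending \<open>h\<close> to a primitive \<open>ord h\<close>-th root of unity.\<close>

lemma exists_character_ne_1:
  assumes fin: "finite (carrier G)" and h: "h \<in> carrier G" "h \<noteq> \<one>"
  shows "\<exists>\<chi>\<in>characters G. \<chi> h \<noteq> 1"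
proof -
  have triv: "subgroup {\<one>} G" by (rule triv_subgroup)
  obtain m :: nat where m: "0 < m" "h [^] m \<in> {\<one>}" "\<And>j. 0 < j \<Longrightarrow> j < m \<Longrightarrow> h [^] j \<notin> {\<one>}"
    using least_pow_in_subgroup[OF fin triv h(1)] by blast
  have "m \<noteq> 1" using m(2) h by auto
  then have angle: "0 < 2 * pi / real m" "2 * pi / real m \<le> pi" using m(1) by (auto simp: field_simps)
  define z where "z = cis (2 * pi / real m)"
  have z: "cmod z = 1" "z ^ m = 1" unfolding z_def DeMoivre using m(1) by simp_all
  have triv_char: "char_on G {\<one>} (\<lambda>_. 1)" unfolding char_on_def by simp
  define T where "T = {s \<otimes> h [^] (k::int) | s k. s \<in> {\<one>}}"
  obtain f where f: "char_on G T f" "f h = z"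
    using char_on_adjoin[OF triv triv_char h(1) m z] unfolding T_def by blast
  obtain f' where f': "char_on G (carrier G) f'" "\<forall>s\<in>T. f' s = f s"
    using char_on_extend[OF fin subgroup_adjoin[OF triv h(1)] f(1)[unfolded T_def]] unfolding T_def by blast
  have "h = \<one> \<otimes> h [^] (1::int)" using h(1) by simp
  then have "h \<in> T" unfolding T_def by blast
  moreover have "z \<noteq> 1"
  proof
    assume "z = 1"
    then have "cos (2 * pi / real m) = cos 0" using cis.sel(1)[of "2 * pi / real m"] unfolding z_def by simp
    moreover have "cos (2 * pi / real m) < cos 0" by (rule cos_monotone_0_pi) (use angle in auto)
    ultimately show False by simp
  qed
  ultimately have "restrict f' (carrier G) h \<noteq> 1" using f' f(2) h(1) by simp
  moreover have "restrict f' (carrier G) \<in> characters G"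
    using f'(1) unfolding characters_def hom_def U1_def char_on_def by auto
  ultimately show ?thesis by blast
qed

end

lemma char_on_characters: "\<chi> \<in> characters H \<Longrightarrow> char_on H (carrier H) \<chi>"
  unfolding characters_def hom_def U1_def char_on_def by auto

lemma characters_mult:
  "\<chi> \<in> characters H \<Longrightarrow> a \<in> carrier H \<Longrightarrow> b \<in> carrier H \<Longrightarrow> \<chi> (a \<otimes>\<^bsub>H\<^esub> b) = \<chi> a * \<chi> b"
  unfolding characters_def hom_def U1_def by auto

lemma characters_norm: "\<chi> \<in> characters H \<Longrightarrow> a \<in> carrier H \<Longrightarrow> cmod (\<chi> a) = 1"
  unfolding characters_def hom_def U1_def by auto

lemma characters_outside: "\<chi> \<in> characters H \<Longrightarrow> a \<notin> carrier H \<Longrightarrow> \<chi> a = undefined"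
  unfolding characters_def extensional_def by auto

lemma characters_one:
  assumes "group H" "\<chi> \<in> characters H"
  shows "\<chi> \<one>\<^bsub>H\<^esub> = 1"
  using group.char_on_one[OF assms(1) group.subgroup_self[OF assms(1)] char_on_characters[OF assms(2)]] .

lemma characters_int_pow:
  assumes "group H" "\<chi> \<in> characters H" "a \<in> carrier H"
  shows "\<chi> (a [^]\<^bsub>H\<^esub> (k::int)) = \<chi> a powi k"
  using group.char_on_int_pow[OF assms(1) group.subgroup_self[OF assms(1)] char_on_characters[OF assms(2)] assms(3)] .

lemma characters_finprod:
  assumes "comm_group H" "\<chi> \<in> characters H" "finite I" "f \<in> I \<rightarrow> carrier H"
  shows "\<chi> (finprod H f I) = (\<Prod>i\<in>I. \<chi> (f i))"
proof -
  interpret comm_group H by fact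
  show ?thesis
    using assms(3,4)
  proof (induction I rule: finite_induct)
    case empty
    then show ?case using characters_one[OF is_group assms(2)] by simp
  next
    case (insert i I)
    then show ?case using characters_mult[OF assms(2)] by simp
  qed
qed

lemma const_1_in_characters: "group H \<Longrightarrow> (\<lambda>g\<in>carrier H. 1) \<in> characters H"
  unfolding characters_def hom_def U1_def by (auto simp: group.is_monoid monoid.m_closed)

lemma mult_in_characters:
  "group H \<Longrightarrow> \<chi> \<in> characters H \<Longrightarrow> \<chi>' \<in> characters H \<Longrightarrow>
    (\<lambda>g\<in>carrier H. \<chi> g * \<chi>' g) \<in> characters H"
  unfolding characters_def hom_def U1_def
  by (auto simp: group.is_monoid monoid.m_closed norm_mult Pi_iff)

lemma cnj_in_characters:
  "group H \<Longrightarrow> \<chi> \<in> characters H \<Longrightarrow> (\<lambda>g\<in>carrier H. cnj (\<chi> g)) \<in> characters H"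
  unfolding characters_def hom_def U1_def by (auto simp: group.is_monoid monoid.m_closed)

lemma finite_characters:
  assumes "group H" "finite (carrier H)"
  shows "finite (characters H)"
proof -
  let ?N = "order H"
  have N: "?N \<ge> 1"
    using monoid.order_gt_0_iff_finite[OF group.is_monoid[OF assms(1)]] assms(2) by simp
  have "\<chi> a ^ ?N = 1" if "\<chi> \<in> characters H" "a \<in> carrier H" for \<chi> a
    using characters_int_pow[OF assms(1) that, of "int ?N"] characters_one[OF assms(1) that(1)]
      group.pow_order_eq_1[OF assms(1) that(2)] by (simp add: int_pow_int)
  then have "characters H \<subseteq> PiE (carrier H) (\<lambda>_. {z. z ^ ?N = 1})"
    unfolding characters_def by (auto simp: PiE_iff extensional_def)
  moreover have "finite (PiE (carrier H) (\<lambda>_. {z::complex. z ^ ?N = 1}))"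
    using assms(2) finite_roots_unity[OF N] by (auto intro!: finite_PiE)
  ultimately show ?thesis by (rule finite_subset)
qed

context group
begin

lemma sum_carrier_translate:
  assumes "a \<in> carrier G"
  shows "(\<Sum>x\<in>carrier G. f (a \<otimes> x)) = (\<Sum>x\<in>carrier G. f x)"
  by (rule sum.reindex_bij_witness[where i="\<lambda>x. inv a \<otimes> x" and j="\<lambda>x. a \<otimes> x"])
     (use assms in \<open>auto simp: m_assoc[symmetric]\<close>)

lemma sum_carrier_inv: "(\<Sum>x\<in>carrier G. f (inv x)) = (\<Sum>x\<in>carrier G. f x)"
  by (rule sum.reindex_bij_witness[where i="\<lambda>x. inv x" and j="\<lambda>x. inv x"]) auto

lemma char_on_sum_eq_0:
  assumes "char_on G (carrier G) f" "a \<in> carrier G" "f a \<noteq> 1"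
  shows "(\<Sum>x\<in>carrier G. f x) = 0"
proof -
  have "(\<Sum>x\<in>carrier G. f x) = (\<Sum>x\<in>carrier G. f (a \<otimes> x))"
    by (rule sum_carrier_translate[OF assms(2), symmetric])
  also have "\<dots> = f a * (\<Sum>x\<in>carrier G. f x)"
    using assms(1,2) unfolding char_on_def by (simp add: sum_distrib_left)
  finally have "(1 - f a) * (\<Sum>x\<in>carrier G. f x) = 0" by (simp add: algebra_simps)
  then show ?thesis using assms(3) by simp
qed

end

section \<open>Perfect pairings\<close>

locale perfect_pairing = A: comm_group A + B: comm_group B
  for A :: "('a, 'c) monoid_scheme" and B :: "('b, 'd) monoid_scheme" +
  fixes P :: "'a \<Rightarrow> 'b \<Rightarrow> complex"
  assumes finite_A: "finite (carrier A)" and finite_B: "finite (carrier B)"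
    and char_left: "b \<in> carrier B \<Longrightarrow> char_on A (carrier A) (\<lambda>a. P a b)"
    and char_right: "a \<in> carrier A \<Longrightarrow> char_on B (carrier B) (P a)"
    and nondegenerate_left: "a \<in> carrier A \<Longrightarrow> a \<noteq> \<one>\<^bsub>A\<^esub> \<Longrightarrow> \<exists>b\<in>carrier B. P a b \<noteq> 1"
    and nondegenerate_right: "b \<in> carrier B \<Longrightarrow> b \<noteq> \<one>\<^bsub>B\<^esub> \<Longrightarrow> \<exists>a\<in>carrier A. P a b \<noteq> 1"

lemma perfect_pairing_swap: "perfect_pairing A B P \<Longrightarrow> perfect_pairing B A (\<lambda>b a. P a b)"
  unfolding perfect_pairing_def perfect_pairing_axioms_def by (simp add: eta_contract_eq)

context perfect_pairing
begin

lemma pairing_inv_left: "a \<in> carrier A \<Longrightarrow> b \<in> carrier B \<Longrightarrow> P (inv\<^bsub>A\<^esub> a) b = cnj (P a b)"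
  using A.char_on_inv[OF A.subgroup_self char_left] .

lemma pairing_inv_right: "a \<in> carrier A \<Longrightarrow> b \<in> carrier B \<Longrightarrow> P a (inv\<^bsub>B\<^esub> b) = cnj (P a b)"
  using B.char_on_inv[OF B.subgroup_self char_right] .

lemma sum_pairing_left:
  assumes "b \<in> carrier B"
  shows "(\<Sum>a\<in>carrier A. P a b) = (if b = \<one>\<^bsub>B\<^esub> then of_nat (card (carrier A)) else 0)"
proof (cases "b = \<one>\<^bsub>B\<^esub>")
  case True
  then show ?thesis using B.char_on_one[OF B.subgroup_self char_right] by simp
next
  case False
  then obtain a where "a \<in> carrier A" "P a b \<noteq> 1" using nondegenerate_right[OF assms] by blast
  then show ?thesis using A.char_on_sum_eq_0[OF char_left[OF assms]] False by simp
qed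

lemma orthogonality_left:
  assumes b: "b \<in> carrier B" and b': "b' \<in> carrier B"
  shows "(\<Sum>a\<in>carrier A. cnj (P a b) * P a b') = (if b = b' then of_nat (card (carrier A)) else 0)"
proof -
  have "cnj (P a b) * P a b' = P a (inv\<^bsub>B\<^esub> b \<otimes>\<^bsub>B\<^esub> b')" if "a \<in> carrier A" for a
    using char_right[OF that] pairing_inv_right[OF that b] b b' unfolding char_on_def by simp
  then have "(\<Sum>a\<in>carrier A. cnj (P a b) * P a b') = (\<Sum>a\<in>carrier A. P a (inv\<^bsub>B\<^esub> b \<otimes>\<^bsub>B\<^esub> b'))"
    by simp
  also have "\<dots> = (if b = b' then of_nat (card (carrier A)) else 0)"
    using sum_pairing_left[of "inv\<^bsub>B\<^esub> b \<otimes>\<^bsub>B\<^esub> b'"] B.inv_solve_left[OF B.one_closed b b'] b b'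
    by (auto simp: eq_commute[of "\<one>\<^bsub>B\<^esub>"])
  finally show ?thesis .
qed

lemma eq_if_pairing_eq_right:
  assumes "b \<in> carrier B" "b' \<in> carrier B" "\<And>a. a \<in> carrier A \<Longrightarrow> P a b = P a b'"
  shows "b = b'"
proof (rule ccontr)
  assume "b \<noteq> b'"
  have "(\<Sum>a\<in>carrier A. cnj (P a b) * P a b') = (\<Sum>a\<in>carrier A. cnj (P a b) * P a b)"
    using assms(3) by simp
  then show False
    using orthogonality_left[OF assms(1,2)] orthogonality_left[OF assms(1,1)] \<open>b \<noteq> b'\<close>
      finite_A A.one_closed by (auto simp: card_gt_0_iff)
qed

lemma card_carrier_eq: "card (carrier A) = card (carrier B)"
proof -
  interpret swapped: perfect_pairing B A "\<lambda>b a. P a b" by (rule perfect_pairing_swap) unfold_locales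
  have "(\<Sum>a\<in>carrier A. \<Sum>b\<in>carrier B. P a b) = (\<Sum>b\<in>carrier B. \<Sum>a\<in>carrier A. P a b)"
    by (rule sum.swap)
  then show ?thesis
    using sum_pairing_left swapped.sum_pairing_left finite_A finite_B by simp
qed

end

context comm_group
begin

lemma finprod_int_pow:
  assumes "finite I" "f \<in> I \<rightarrow> carrier G"
  shows "finprod G f I [^] (k::int) = finprod G (\<lambda>i. f i [^] k) I"
  using assms
proof (induction I rule: finite_induct)
  case (insert i I)
  then show ?case by (simp add: int_pow_distrib Pi_iff)
qed simp

lemma int_pow_sum:
  assumes "finite I" "a \<in> carrier G"
  shows "a [^] (\<Sum>i\<in>I. c i :: int) = finprod G (\<lambda>i. a [^] c i) I"
  using assms(1)
proof (induction I rule: finite_induct)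
  case (insert i I)
  then show ?case using assms(2) by (simp add: int_pow_mult)
qed simp

lemma finprod_swap:
  assumes "finite I" "finite J" "\<And>i j. i \<in> I \<Longrightarrow> j \<in> J \<Longrightarrow> f i j \<in> carrier G"
  shows "finprod G (\<lambda>i. finprod G (f i) J) I = finprod G (\<lambda>j. finprod G (\<lambda>i. f i j) I) J"
  using assms(1,3)
proof (induction I rule: finite_induct)
  case (insert i I)
  have "finprod G (\<lambda>i. finprod G (f i) J) (insert i I) =
      finprod G (f i) J \<otimes> finprod G (\<lambda>j. finprod G (\<lambda>i. f i j) I) J"
    using insert by (simp add: Pi_iff)
  also have "\<dots> = finprod G (\<lambda>j. f i j \<otimes> finprod G (\<lambda>i. f i j) I) J"
    using insert by (simp add: Pi_iff)
  also have "\<dots> = finprod G (\<lambda>j. finprod G (\<lambda>i. f i j) (insert i I)) J"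
    using insert by (intro finprod_cong') (auto simp: Pi_iff)
  finally show ?case .
qed simp

lemma finprod_finprod_int_pow:
  assumes "finite I" "finite J" "a \<in> J \<rightarrow> carrier G"
  shows "finprod G (\<lambda>i. finprod G (\<lambda>j. a j [^] (M i j :: int)) J) I = finprod G (\<lambda>j. a j [^] (\<Sum>i\<in>I. M i j)) J"
proof -
  have "finprod G (\<lambda>i. finprod G (\<lambda>j. a j [^] M i j) J) I = finprod G (\<lambda>j. finprod G (\<lambda>i. a j [^] M i j) I) J"
    using assms by (intro finprod_swap) auto
  also have "\<dots> = finprod G (\<lambda>j. a j [^] (\<Sum>i\<in>I. M i j)) J"
    using assms by (intro finprod_cong') (auto simp: int_pow_sum Pi_iff)
  finally show ?thesis .
qed

end

lemma hom_finprod: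
  assumes "comm_group H" "comm_group H'" "h \<in> hom H H'" "finite I" "f \<in> I \<rightarrow> carrier H"
  shows "h (finprod H f I) = finprod H' (\<lambda>i. h (f i)) I"
proof -
  interpret H: comm_group H by fact
  interpret H': comm_group H' by fact
  interpret group_hom H H' h by (simp add: group_hom_def group_hom_axioms_def assms(3))
  show ?thesis
    using assms(4,5)
  proof (induction I rule: finite_induct)
    case (insert i I)
    then show ?case by (simp add: Pi_iff)
  qed simp
qed

lemma finite_graded_PiE:
  assumes "finite {n. K n \<noteq> {}}" "\<And>n. finite (K n)" "\<And>n. finite (A n)"
  shows "finite {f. \<forall>n. f n \<in> (\<Pi>\<^sub>E x\<in>K n. A n)}"
proof -
  let ?N = "{n. K n \<noteq> {}}"
  have "inj_on (\<lambda>f. restrict f ?N) {f. \<forall>n. f n \<in> (\<Pi>\<^sub>E x\<in>K n. A n)}"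
  proof (rule inj_onI)
    fix f g assume f: "f \<in> {f. \<forall>n. f n \<in> (\<Pi>\<^sub>E x\<in>K n. A n)}" and g: "g \<in> {f. \<forall>n. f n \<in> (\<Pi>\<^sub>E x\<in>K n. A n)}"
      and eq: "restrict f ?N = restrict g ?N"
    show "f = g"
    proof
      fix n
      have "f n \<in> (\<Pi>\<^sub>E x\<in>K n. A n)" "g n \<in> (\<Pi>\<^sub>E x\<in>K n. A n)" using f g by auto
      then show "f n = g n"
        using fun_cong[OF eq, of n] by (cases "K n = {}") (auto simp: PiE_empty_domain)
    qed
  qed
  moreover have "(\<lambda>f. restrict f ?N) ` {f. \<forall>n. f n \<in> (\<Pi>\<^sub>E x\<in>K n. A n)} \<subseteq> (\<Pi>\<^sub>E n\<in>?N. \<Pi>\<^sub>E x\<in>K n. A n)"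
    by (rule image_subsetI) (simp add: restrict_PiE_iff)
  moreover have "finite (\<Pi>\<^sub>E n\<in>?N. \<Pi>\<^sub>E x\<in>K n. A n)"
    using assms by (intro finite_PiE) auto
  ultimately show ?thesis by (meson finite_imageD finite_subset)
qed

lemma prod_shift_support:
  fixes f :: "int \<Rightarrow> 'a::comm_monoid_mult"
  assumes "finite S" "\<And>n. n \<notin> S \<Longrightarrow> f n = 1" "\<And>n. n - 1 \<notin> S \<Longrightarrow> f n = 1"
  shows "(\<Prod>m\<in>S. f (m + 1)) = (\<Prod>n\<in>S. f n)"
proof -
  have "(\<Prod>m\<in>S. f (m + 1)) = (\<Prod>n\<in>(\<lambda>m. m + 1) ` S. f n)"
    by (simp add: prod.reindex inj_on_def)
  also have "\<dots> = (\<Prod>n\<in>S \<union> (\<lambda>m. m + 1) ` S. f n)"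
  proof (intro prod.mono_neutral_left ballI)
    fix n assume "n \<in> S \<union> (\<lambda>m. m + 1) ` S - (\<lambda>m. m + 1) ` S"
    then have "n - 1 \<notin> S" by (metis DiffD2 diff_add_cancel image_eqI)
    then show "f n = 1" by (rule assms(3))
  qed (use assms(1) in auto)
  also have "\<dots> = (\<Prod>n\<in>S. f n)"
    using assms by (intro prod.mono_neutral_right) auto
  finally show ?thesis .
qed

section \<open>Cochains and their duals\<close>

definition cochain_zero :: "(int \<Rightarrow> 'k set) \<Rightarrow> (int \<Rightarrow> ('g, 'm) monoid_scheme) \<Rightarrow> int
    \<Rightarrow> (int \<Rightarrow> 'k \<Rightarrow> 'g)" where
  "cochain_zero K G p = (\<lambda>n. \<lambda>x\<in>K n. \<one>\<^bsub>G (n - p)\<^esub>)"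

definition cochain_group :: "(int \<Rightarrow> 'k set) \<Rightarrow> (int \<Rightarrow> ('g, 'm) monoid_scheme) \<Rightarrow> int
    \<Rightarrow> (int \<Rightarrow> 'k \<Rightarrow> 'g) monoid" where
  "cochain_group K G p =
    \<lparr>carrier = cochains K G p, monoid.mult = cochain_add K G p, one = cochain_zero K G p\<rparr>"

definition hom_low_one :: "(int \<Rightarrow> 'k set) \<Rightarrow> (int \<Rightarrow> ('g, 'm) monoid_scheme) \<Rightarrow> int
    \<Rightarrow> (int \<Rightarrow> 'k \<Rightarrow> 'g \<Rightarrow> complex)" where
  "hom_low_one K G p = (\<lambda>n. \<lambda>x\<in>K n. \<lambda>g\<in>carrier (G (n - p)). 1)"

definition hom_low_mult :: "(int \<Rightarrow> 'k set) \<Rightarrow> (int \<Rightarrow> ('g, 'm) monoid_scheme) \<Rightarrow> int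
    \<Rightarrow> (int \<Rightarrow> 'k \<Rightarrow> 'g \<Rightarrow> complex) \<Rightarrow> (int \<Rightarrow> 'k \<Rightarrow> 'g \<Rightarrow> complex)
    \<Rightarrow> (int \<Rightarrow> 'k \<Rightarrow> 'g \<Rightarrow> complex)" where
  "hom_low_mult K G p \<rho> \<rho>' = (\<lambda>n. \<lambda>x\<in>K n. \<lambda>g\<in>carrier (G (n - p)). \<rho> n x g * \<rho>' n x g)"

definition hom_low_group :: "(int \<Rightarrow> 'k set) \<Rightarrow> (int \<Rightarrow> ('g, 'm) monoid_scheme) \<Rightarrow> int
    \<Rightarrow> (int \<Rightarrow> 'k \<Rightarrow> 'g \<Rightarrow> complex) monoid" where
  "hom_low_group K G p =
    \<lparr>carrier = hom_low K G p, monoid.mult = hom_low_mult K G p, one = hom_low_one K G p\<rparr>"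

lemma cochain_group_simps [simp]:
  "carrier (cochain_group K G p) = cochains K G p"
  "monoid.mult (cochain_group K G p) = cochain_add K G p"
  "one (cochain_group K G p) = cochain_zero K G p"
  unfolding cochain_group_def by simp_all

lemma hom_low_group_simps [simp]:
  "carrier (hom_low_group K G p) = hom_low K G p"
  "monoid.mult (hom_low_group K G p) = hom_low_mult K G p"
  "one (hom_low_group K G p) = hom_low_one K G p"
  unfolding hom_low_group_def by simp_all

locale finite_cochain_data =
  fixes K :: "int \<Rightarrow> 'k set" and G :: "int \<Rightarrow> ('g, 'm) monoid_scheme"
  assumes finite_K: "\<And>n. finite (K n)" and finite_support: "finite {n. K n \<noteq> {}}"
    and comm_group_G: "\<And>n. comm_group (G n)" and finite_G: "\<And>n. finite (carrier (G n))"
begin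

lemma group_G: "group (G n)"
  using comm_group_G comm_group.axioms(2) by blast

lemma cochains_apply_in: "\<omega> \<in> cochains K G p \<Longrightarrow> x \<in> K n \<Longrightarrow> \<omega> n x \<in> carrier (G (n - p))"
  unfolding cochains_def by auto

lemma cochains_apply_in': "\<omega> \<in> cochains K G p \<Longrightarrow> x \<in> K n \<Longrightarrow> m = n - p \<Longrightarrow> \<omega> n x \<in> carrier (G m)"
  using cochains_apply_in by simp

lemma cochains_undefined: "\<omega> \<in> cochains K G p \<Longrightarrow> x \<notin> K n \<Longrightarrow> \<omega> n x = undefined"
  unfolding cochains_def by (auto simp: PiE_iff extensional_def)

lemma cochainsI:
  "(\<And>n x. x \<in> K n \<Longrightarrow> \<omega> n x \<in> carrier (G (n - p))) \<Longrightarrow>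
    (\<And>n x. x \<notin> K n \<Longrightarrow> \<omega> n x = undefined) \<Longrightarrow> \<omega> \<in> cochains K G p"
  unfolding cochains_def by (auto simp: PiE_iff extensional_def)

lemma cochains_eqI:
  "\<omega> \<in> cochains K G p \<Longrightarrow> \<alpha> \<in> cochains K G p \<Longrightarrow> (\<And>n x. x \<in> K n \<Longrightarrow> \<omega> n x = \<alpha> n x) \<Longrightarrow> \<omega> = \<alpha>"
  using cochains_undefined by (intro ext) metis

lemma cochain_add_apply: "x \<in> K n \<Longrightarrow> cochain_add K G p \<omega> \<alpha> n x = \<omega> n x \<otimes>\<^bsub>G (n - p)\<^esub> \<alpha> n x"
  unfolding cochain_add_def by simp

lemma cochain_zero_apply: "x \<in> K n \<Longrightarrow> cochain_zero K G p n x = \<one>\<^bsub>G (n - p)\<^esub>"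
  unfolding cochain_zero_def by simp

lemma cochain_add_in_cochains:
  "\<omega> \<in> cochains K G p \<Longrightarrow> \<alpha> \<in> cochains K G p \<Longrightarrow> cochain_add K G p \<omega> \<alpha> \<in> cochains K G p"
  by (intro cochainsI) (auto simp: cochains_apply_in group.is_monoid[OF group_G] monoid.m_closed cochain_add_def)

lemma cochain_zero_in_cochains: "cochain_zero K G p \<in> cochains K G p"
  by (intro cochainsI) (auto simp: cochain_zero_def group.is_monoid[OF group_G] monoid.one_closed)

lemma comm_group_cochain_group: "comm_group (cochain_group K G p)"
proof (rule comm_groupI; unfold cochain_group_simps)
  fix \<omega> \<alpha> assume "\<omega> \<in> cochains K G p" "\<alpha> \<in> cochains K G p"
  then show "cochain_add K G p \<omega> \<alpha> \<in> cochains K G p" by (rule cochain_add_in_cochains)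
  show "cochain_add K G p \<omega> \<alpha> = cochain_add K G p \<alpha> \<omega>"
    unfolding cochain_add_def
    using comm_monoid.m_comm[OF comm_group.axioms(1)[OF comm_group_G]]
      cochains_apply_in[OF \<open>\<omega> \<in> _\<close>] cochains_apply_in[OF \<open>\<alpha> \<in> _\<close>]
    by (intro ext) simp
next
  show "cochain_zero K G p \<in> cochains K G p" by (rule cochain_zero_in_cochains)
next
  fix \<omega> \<alpha> \<gamma> assume "\<omega> \<in> cochains K G p" "\<alpha> \<in> cochains K G p" "\<gamma> \<in> cochains K G p"
  then show "cochain_add K G p (cochain_add K G p \<omega> \<alpha>) \<gamma> = cochain_add K G p \<omega> (cochain_add K G p \<alpha> \<gamma>)"
    unfolding cochain_add_def using group.is_monoid[OF group_G]
    by (intro ext) (simp add: cochains_apply_in monoid.m_assoc)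
next
  fix \<omega> assume "\<omega> \<in> cochains K G p"
  then show "cochain_add K G p (cochain_zero K G p) \<omega> = \<omega>"
    unfolding cochain_add_def cochain_zero_def using group.is_monoid[OF group_G]
    by (intro ext) (simp add: cochains_apply_in cochains_undefined)
  define \<alpha> where "\<alpha> = (\<lambda>n. \<lambda>x\<in>K n. inv\<^bsub>G (n - p)\<^esub> (\<omega> n x))"
  have "\<alpha> \<in> cochains K G p"
    unfolding \<alpha>_def using \<open>\<omega> \<in> _\<close> by (intro cochainsI) (auto simp: cochains_apply_in group.inv_closed[OF group_G])
  moreover have "cochain_add K G p \<alpha> \<omega> = cochain_zero K G p"
    unfolding cochain_add_def cochain_zero_def \<alpha>_def using \<open>\<omega> \<in> _\<close>
    by (intro ext) (simp add: cochains_apply_in group.l_inv[OF group_G])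
  ultimately show "\<exists>\<alpha>\<in>cochains K G p. cochain_add K G p \<alpha> \<omega> = cochain_zero K G p" by blast
qed

lemma finite_cochains: "finite (cochains K G p)"
  unfolding cochains_def using finite_graded_PiE[OF finite_support finite_K finite_G] .

lemma card_cochains_pos: "0 < card (cochains K G p)"
  using finite_cochains cochain_zero_in_cochains by (auto simp: card_gt_0_iff)

lemma hom_low_apply_in: "\<rho> \<in> hom_low K G p \<Longrightarrow> x \<in> K n \<Longrightarrow> \<rho> n x \<in> characters (G (n - p))"
  unfolding hom_low_def by auto

lemma hom_low_undefined: "\<rho> \<in> hom_low K G p \<Longrightarrow> x \<notin> K n \<Longrightarrow> \<rho> n x = undefined"
  unfolding hom_low_def by (auto simp: PiE_iff extensional_def)

lemma hom_lowI:
  "(\<And>n x. x \<in> K n \<Longrightarrow> \<rho> n x \<in> characters (G (n - p))) \<Longrightarrow>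
    (\<And>n x. x \<notin> K n \<Longrightarrow> \<rho> n x = undefined) \<Longrightarrow> \<rho> \<in> hom_low K G p"
  unfolding hom_low_def by (auto simp: PiE_iff extensional_def)

lemma hom_low_eqI:
  assumes "\<rho> \<in> hom_low K G p" "\<rho>' \<in> hom_low K G p"
    and "\<And>n x g. x \<in> K n \<Longrightarrow> g \<in> carrier (G (n - p)) \<Longrightarrow> \<rho> n x g = \<rho>' n x g"
  shows "\<rho> = \<rho>'"
proof (intro ext)
  fix n x g
  show "\<rho> n x g = \<rho>' n x g"
  proof (cases "x \<in> K n \<and> g \<in> carrier (G (n - p))")
    case False
    then show ?thesis
      using assms(1,2) hom_low_undefined characters_outside[OF hom_low_apply_in] by metis
  qed (use assms(3) in blast)
qed

lemma hom_low_mult_in_hom_low: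
  "\<rho> \<in> hom_low K G p \<Longrightarrow> \<rho>' \<in> hom_low K G p \<Longrightarrow> hom_low_mult K G p \<rho> \<rho>' \<in> hom_low K G p"
  by (intro hom_lowI) (auto simp: hom_low_mult_def hom_low_apply_in mult_in_characters[OF group_G])

lemma hom_low_one_in_hom_low: "hom_low_one K G p \<in> hom_low K G p"
  by (intro hom_lowI) (auto simp: hom_low_one_def const_1_in_characters[OF group_G])

lemma comm_group_hom_low_group: "comm_group (hom_low_group K G p)"
proof (rule comm_groupI; unfold hom_low_group_simps)
  fix \<rho> \<rho>' assume "\<rho> \<in> hom_low K G p" "\<rho>' \<in> hom_low K G p"
  then show "hom_low_mult K G p \<rho> \<rho>' \<in> hom_low K G p" by (rule hom_low_mult_in_hom_low)
  show "hom_low_mult K G p \<rho> \<rho>' = hom_low_mult K G p \<rho>' \<rho>"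
    unfolding hom_low_mult_def by (simp add: mult.commute)
next
  show "hom_low_one K G p \<in> hom_low K G p" by (rule hom_low_one_in_hom_low)
next
  fix \<rho> \<rho>' \<rho>'' assume "\<rho> \<in> hom_low K G p" "\<rho>' \<in> hom_low K G p" "\<rho>'' \<in> hom_low K G p"
  then show "hom_low_mult K G p (hom_low_mult K G p \<rho> \<rho>') \<rho>'' =
      hom_low_mult K G p \<rho> (hom_low_mult K G p \<rho>' \<rho>'')"
    unfolding hom_low_mult_def by (intro ext) simp
next
  fix \<rho> assume \<rho>: "\<rho> \<in> hom_low K G p"
  then show "hom_low_mult K G p (hom_low_one K G p) \<rho> = \<rho>"
    unfolding hom_low_mult_def hom_low_one_def
    by (intro ext) (simp add: hom_low_undefined characters_outside[OF hom_low_apply_in])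
  define \<rho>' where "\<rho>' = (\<lambda>n. \<lambda>x\<in>K n. \<lambda>g\<in>carrier (G (n - p)). cnj (\<rho> n x g))"
  have "\<rho>' \<in> hom_low K G p"
    unfolding \<rho>'_def using \<rho> by (intro hom_lowI) (auto simp: hom_low_apply_in cnj_in_characters[OF group_G])
  moreover have "hom_low_mult K G p \<rho>' \<rho> = hom_low_one K G p"
    unfolding hom_low_mult_def hom_low_one_def \<rho>'_def using \<rho>
    by (intro ext) (simp add: cnj_mult_self_if_norm_1 characters_norm[OF hom_low_apply_in])
  ultimately show "\<exists>\<rho>'\<in>hom_low K G p. hom_low_mult K G p \<rho>' \<rho> = hom_low_one K G p" by blast
qed

lemma finite_hom_low: "finite (hom_low K G p)"
  unfolding hom_low_def
  using finite_graded_PiE[OF finite_support finite_K finite_characters[OF group_G finite_G]] .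

lemma pairing_cochain_add:
  assumes "\<rho> \<in> hom_low K G p" "\<omega> \<in> cochains K G p" "\<alpha> \<in> cochains K G p"
  shows "pairing K \<rho> (cochain_add K G p \<omega> \<alpha>) = pairing K \<rho> \<omega> * pairing K \<rho> \<alpha>"
  unfolding pairing_def prod.distrib[symmetric]
  using assms by (intro prod.cong refl)
    (simp add: cochain_add_apply characters_mult hom_low_apply_in cochains_apply_in)

lemma pairing_hom_low_mult:
  assumes "\<omega> \<in> cochains K G p"
  shows "pairing K (hom_low_mult K G p \<rho> \<rho>') \<omega> = pairing K \<rho> \<omega> * pairing K \<rho>' \<omega>"
  unfolding pairing_def prod.distrib[symmetric]
  using assms by (intro prod.cong refl) (simp add: hom_low_mult_def cochains_apply_in)

lemma norm_pairing:
  assumes "\<rho> \<in> hom_low K G p" "\<omega> \<in> cochains K G p"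
  shows "cmod (pairing K \<rho> \<omega>) = 1"
proof -
  have "cmod (\<rho> n x (\<omega> n x)) = 1" if "x \<in> K n" for n x
    using characters_norm[OF hom_low_apply_in[OF assms(1) that] cochains_apply_in[OF assms(2) that]] .
  then show ?thesis unfolding pairing_def prod_norm[symmetric]
    by (intro prod.neutral ballI) (simp add: prod_norm[symmetric])
qed

lemma pairing_eq_single_site:
  assumes x0: "x0 \<in> K n0"
    and others: "\<And>n x. x \<in> K n \<Longrightarrow> (n, x) \<noteq> (n0, x0) \<Longrightarrow> \<rho> n x (\<omega> n x) = 1"
  shows "pairing K \<rho> \<omega> = \<rho> n0 x0 (\<omega> n0 x0)"
proof -
  have n0: "n0 \<in> {n. K n \<noteq> {}}" using x0 by auto
  have "pairing K \<rho> \<omega> = (\<Prod>x\<in>K n0. \<rho> n0 x (\<omega> n0 x)) *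
      (\<Prod>n\<in>{n. K n \<noteq> {}} - {n0}. \<Prod>x\<in>K n. \<rho> n x (\<omega> n x))"
    unfolding pairing_def using prod.remove[OF finite_support n0] by simp
  also have "(\<Prod>n\<in>{n. K n \<noteq> {}} - {n0}. \<Prod>x\<in>K n. \<rho> n x (\<omega> n x)) = 1"
    using others by (intro prod.neutral ballI) auto
  also have "(\<Prod>x\<in>K n0. \<rho> n0 x (\<omega> n0 x)) = \<rho> n0 x0 (\<omega> n0 x0) * (\<Prod>x\<in>K n0 - {x0}. \<rho> n0 x (\<omega> n0 x))"
    using prod.remove[OF finite_K x0] by simp
  also have "(\<Prod>x\<in>K n0 - {x0}. \<rho> n0 x (\<omega> n0 x)) = 1"
    using others by (intro prod.neutral ballI) auto
  finally show ?thesis by simp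
qed

lemma exists_hom_low_pairing_ne_1:
  assumes \<omega>: "\<omega> \<in> cochains K G p" "\<omega> \<noteq> cochain_zero K G p"
  shows "\<exists>\<rho>\<in>hom_low K G p. pairing K \<rho> \<omega> \<noteq> 1"
proof -
  obtain n x where x: "x \<in> K n" "\<omega> n x \<noteq> \<one>\<^bsub>G (n - p)\<^esub>"
    using cochains_eqI[OF \<omega>(1) cochain_zero_in_cochains] cochain_zero_apply \<omega>(2) by metis
  obtain \<chi> where \<chi>: "\<chi> \<in> characters (G (n - p))" "\<chi> (\<omega> n x) \<noteq> 1"
    using comm_group.exists_character_ne_1[OF comm_group_G finite_G cochains_apply_in[OF \<omega>(1) x(1)] x(2)]
    by blast
  define \<rho> where "\<rho> = (\<lambda>m. \<lambda>y\<in>K m. if m = n \<and> y = x then \<chi> else (\<lambda>g\<in>carrier (G (m - p)). 1))"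
  have "\<rho> \<in> hom_low K G p"
    unfolding \<rho>_def by (intro hom_lowI) (auto simp: \<chi>(1) const_1_in_characters[OF group_G])
  moreover have "pairing K \<rho> \<omega> = \<rho> n x (\<omega> n x)"
  proof (rule pairing_eq_single_site[OF x(1)])
    fix m y assume "y \<in> K m" "(m, y) \<noteq> (n, x)"
    then show "\<rho> m y (\<omega> m y) = 1" unfolding \<rho>_def using cochains_apply_in[OF \<omega>(1)] by auto
  qed
  moreover have "\<rho> n x = \<chi>" unfolding \<rho>_def using x(1) by simp
  ultimately show ?thesis using \<chi>(2) by metis
qed

lemma exists_cochain_pairing_ne_1:
  assumes \<rho>: "\<rho> \<in> hom_low K G p" "\<rho> \<noteq> hom_low_one K G p"
  shows "\<exists>\<omega>\<in>cochains K G p. pairing K \<rho> \<omega> \<noteq> 1"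
proof -
  obtain n x g where x: "x \<in> K n" "g \<in> carrier (G (n - p))" "\<rho> n x g \<noteq> 1"
    using hom_low_eqI[OF \<rho>(1) hom_low_one_in_hom_low] \<rho>(2) unfolding hom_low_one_def by fastforce
  define \<omega> where "\<omega> = (\<lambda>m. \<lambda>y\<in>K m. if m = n \<and> y = x then g else \<one>\<^bsub>G (m - p)\<^esub>)"
  have "\<omega> \<in> cochains K G p"
    unfolding \<omega>_def using x(2) by (intro cochainsI) (auto intro: monoid.one_closed group.is_monoid group_G)
  moreover have "pairing K \<rho> \<omega> = \<rho> n x (\<omega> n x)"
  proof (rule pairing_eq_single_site[OF x(1)])
    fix m y assume "y \<in> K m" "(m, y) \<noteq> (n, x)"
    then show "\<rho> m y (\<omega> m y) = 1"
      unfolding \<omega>_def using characters_one[OF group_G hom_low_apply_in[OF \<rho>(1)]] by auto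
  qed
  moreover have "\<omega> n x = g" unfolding \<omega>_def using x(1) by simp
  ultimately show ?thesis using x(3) by metis
qed

lemma perfect_pairing_cochains:
  "perfect_pairing (cochain_group K G p) (hom_low_group K G p) (\<lambda>\<omega> \<rho>. pairing K \<rho> \<omega>)"
  by (intro perfect_pairing.intro comm_group_cochain_group comm_group_hom_low_group perfect_pairing_axioms.intro)
    (simp_all add: char_on_def finite_cochains finite_hom_low norm_pairing pairing_cochain_add
      pairing_hom_low_mult exists_hom_low_pairing_ne_1 exists_cochain_pairing_ne_1)

end

section \<open>The coboundary and its transpose\<close>

definition cobdry_sign :: "int \<Rightarrow> int" where
  "cobdry_sign p = (if even p then -1 else 1)"

lemma cobdry_sign_add_1 [simp]: "cobdry_sign (p + 1) = - cobdry_sign p"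
  unfolding cobdry_sign_def by simp

locale chain_complex_data = finite_cochain_data K G
  for K :: "int \<Rightarrow> 'k set" and G :: "int \<Rightarrow> ('g, 'm) monoid_scheme" +
  fixes bC :: "int \<Rightarrow> 'k \<Rightarrow> 'k \<Rightarrow> int" and bG :: "int \<Rightarrow> 'g \<Rightarrow> 'g"
  assumes C_chain: "\<And>n x z. x \<in> K n \<Longrightarrow> z \<in> K (n - 2) \<Longrightarrow>
      (\<Sum>y\<in>K (n - 1). bC n x y * bC (n - 1) y z) = 0"
    and bG_hom: "\<And>n. bG n \<in> hom (G n) (G (n - 1))"
    and G_chain: "\<And>n g. g \<in> carrier (G n) \<Longrightarrow> bG (n - 1) (bG n g) = \<one>\<^bsub>G (n - 2)\<^esub>"
begin

lemma bG_in: "g \<in> carrier (G n) \<Longrightarrow> m = n - 1 \<Longrightarrow> bG n g \<in> carrier (G m)"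
  using bG_hom[of n] unfolding hom_def by auto

lemma bG_mult:
  "a \<in> carrier (G n) \<Longrightarrow> b \<in> carrier (G n) \<Longrightarrow> bG n (a \<otimes>\<^bsub>G n\<^esub> b) = bG n a \<otimes>\<^bsub>G (n - 1)\<^esub> bG n b"
  using bG_hom[of n] unfolding hom_def by auto

lemma cobdry_apply:
  assumes "x \<in> K n" "H = G (n - (p + 1))"
  shows "cobdry K bC G bG p \<omega> n x =
    finprod H (\<lambda>y. \<omega> (n - 1) y [^]\<^bsub>H\<^esub> bC n x y) (K (n - 1))
      \<otimes>\<^bsub>H\<^esub> bG (n - p) (\<omega> n x) [^]\<^bsub>H\<^esub> cobdry_sign p"
  unfolding cobdry_def cobdry_sign_def using assms by simp

lemma cobdry_in_cochains:
  assumes \<omega>: "\<omega> \<in> cochains K G p"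
  shows "cobdry K bC G bG p \<omega> \<in> cochains K G (p + 1)"
proof (rule cochainsI)
  fix n x assume x: "x \<in> K n"
  interpret H: comm_group "G (n - (p + 1))" by (rule comm_group_G)
  have "\<omega> (n - 1) y \<in> carrier (G (n - (p + 1)))" if "y \<in> K (n - 1)" for y
    by (rule cochains_apply_in'[OF \<omega> that]) simp
  moreover have "bG (n - p) (\<omega> n x) \<in> carrier (G (n - (p + 1)))"
    by (rule bG_in[OF cochains_apply_in[OF \<omega> x]]) simp
  ultimately show "cobdry K bC G bG p \<omega> n x \<in> carrier (G (n - (p + 1)))"
    unfolding cobdry_apply[OF x refl] by (auto intro!: H.finprod_closed)
qed (simp add: cobdry_def)

lemma cobdry_cochain_add:
  assumes \<omega>: "\<omega> \<in> cochains K G p" and \<alpha>: "\<alpha> \<in> cochains K G p"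
  shows "cobdry K bC G bG p (cochain_add K G p \<omega> \<alpha>) =
    cochain_add K G (p + 1) (cobdry K bC G bG p \<omega>) (cobdry K bC G bG p \<alpha>)"
proof (rule cochains_eqI[OF cobdry_in_cochains cochain_add_in_cochains])
  fix n x assume x: "x \<in> K n"
  define H where "H = G (n - (p + 1))"
  interpret H: comm_group H unfolding H_def by (rule comm_group_G)
  define e where "e = cobdry_sign p"
  define F where "F \<gamma> = finprod H (\<lambda>y. \<gamma> (n - 1) y [^]\<^bsub>H\<^esub> bC n x y) (K (n - 1))" for \<gamma>
  have y_in: "\<omega> (n - 1) y \<in> carrier H" "\<alpha> (n - 1) y \<in> carrier H" if "y \<in> K (n - 1)" for y
    unfolding H_def by (rule cochains_apply_in'[OF \<omega> that], simp, rule cochains_apply_in'[OF \<alpha> that], simp)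
  have x_in: "\<omega> n x \<in> carrier (G (n - p))" "\<alpha> n x \<in> carrier (G (n - p))"
    using cochains_apply_in[OF \<omega> x] cochains_apply_in[OF \<alpha> x] by simp_all
  have bG_x_in: "bG (n - p) (\<omega> n x) \<in> carrier H" "bG (n - p) (\<alpha> n x) \<in> carrier H"
    unfolding H_def by (rule bG_in[OF x_in(1)], simp, rule bG_in[OF x_in(2)], simp)
  have H_eq: "G (n - 1 - p) = H" and H_eq': "G (n - p - 1) = H" unfolding H_def by (simp_all add: algebra_simps)
  have F_add: "F (cochain_add K G p \<omega> \<alpha>) = F \<omega> \<otimes>\<^bsub>H\<^esub> F \<alpha>"
  proof -
    have "F (cochain_add K G p \<omega> \<alpha>) =
        finprod H (\<lambda>y. \<omega> (n - 1) y [^]\<^bsub>H\<^esub> bC n x y \<otimes>\<^bsub>H\<^esub> \<alpha> (n - 1) y [^]\<^bsub>H\<^esub> bC n x y) (K (n - 1))"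
      unfolding F_def using y_in
      by (intro H.finprod_cong') (auto simp: cochain_add_apply H_eq H.int_pow_distrib)
    then show ?thesis unfolding F_def using y_in by (simp add: Pi_iff)
  qed
  have "cobdry K bC G bG p (cochain_add K G p \<omega> \<alpha>) n x =
      (F \<omega> \<otimes>\<^bsub>H\<^esub> F \<alpha>) \<otimes>\<^bsub>H\<^esub> (bG (n - p) (\<omega> n x) [^]\<^bsub>H\<^esub> e \<otimes>\<^bsub>H\<^esub> bG (n - p) (\<alpha> n x) [^]\<^bsub>H\<^esub> e)"
    unfolding cobdry_apply[OF x H_def] F_def[symmetric] e_def[symmetric] F_add
    using bG_mult[OF x_in] bG_x_in by (simp add: cochain_add_apply[OF x] H_eq' H.int_pow_distrib)
  also have "\<dots> = (F \<omega> \<otimes>\<^bsub>H\<^esub> bG (n - p) (\<omega> n x) [^]\<^bsub>H\<^esub> e) \<otimes>\<^bsub>H\<^esub> (F \<alpha> \<otimes>\<^bsub>H\<^esub> bG (n - p) (\<alpha> n x) [^]\<^bsub>H\<^esub> e)"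
    using bG_x_in y_in unfolding F_def by (simp add: H.m_ac Pi_iff)
  also have "\<dots> = cochain_add K G (p + 1) (cobdry K bC G bG p \<omega>) (cobdry K bC G bG p \<alpha>) n x"
    unfolding cochain_add_apply[OF x] cobdry_apply[OF x H_def] F_def e_def H_def ..
  finally show "cobdry K bC G bG p (cochain_add K G p \<omega> \<alpha>) n x =
      cochain_add K G (p + 1) (cobdry K bC G bG p \<omega>) (cobdry K bC G bG p \<alpha>) n x" .
qed (use assms cobdry_in_cochains cochain_add_in_cochains in auto)

lemma group_hom_cobdry:
  "group_hom (cochain_group K G p) (cochain_group K G (p + 1)) (cobdry K bC G bG p)"
  unfolding group_hom_def group_hom_axioms_def
  using comm_group.axioms(2)[OF comm_group_cochain_group]
  by (auto simp: hom_def cobdry_in_cochains cobdry_cochain_add)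

lemma bG_cobdry_apply:
  assumes \<omega>: "\<omega> \<in> cochains K G p" and x: "x \<in> K n"
  shows "bG (n - (p + 1)) (cobdry K bC G bG p \<omega> n x) =
    finprod (G (n - (p + 2))) (\<lambda>y. bG (n - (p + 1)) (\<omega> (n - 1) y) [^]\<^bsub>G (n - (p + 2))\<^esub> bC n x y) (K (n - 1))"
proof -
  define H where "H = G (n - (p + 2))"
  define Gm where "Gm = G (n - (p + 1))"
  interpret H: comm_group H unfolding H_def by (rule comm_group_G)
  interpret Gm: comm_group Gm unfolding Gm_def by (rule comm_group_G)
  have "bG (n - (p + 1)) \<in> hom Gm H"
    using bG_hom[of "n - (p + 1)"] unfolding Gm_def H_def by (simp add: algebra_simps)
  then interpret d: group_hom Gm H "bG (n - (p + 1))"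
    by (simp add: group_hom_def group_hom_axioms_def Gm.is_group H.is_group)
  have \<omega>_y: "\<omega> (n - 1) y \<in> carrier Gm" if "y \<in> K (n - 1)" for y
    unfolding Gm_def by (rule cochains_apply_in'[OF \<omega> that]) simp
  have \<omega>_x: "\<omega> n x \<in> carrier (G (n - p))" by (rule cochains_apply_in[OF \<omega> x])
  have bG_\<omega>_x: "bG (n - p) (\<omega> n x) \<in> carrier Gm"
    unfolding Gm_def by (rule bG_in[OF \<omega>_x]) simp
  have "bG (n - (p + 1)) (bG (n - p) (\<omega> n x)) = \<one>\<^bsub>H\<^esub>"
    using G_chain[OF \<omega>_x] unfolding H_def by (simp add: algebra_simps)
  then have "bG (n - (p + 1)) (bG (n - p) (\<omega> n x) [^]\<^bsub>Gm\<^esub> cobdry_sign p) = \<one>\<^bsub>H\<^esub>"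
    using d.hom_int_pow[OF bG_\<omega>_x] by simp
  moreover have "bG (n - (p + 1)) (finprod Gm (\<lambda>y. \<omega> (n - 1) y [^]\<^bsub>Gm\<^esub> bC n x y) (K (n - 1))) =
      finprod H (\<lambda>y. bG (n - (p + 1)) (\<omega> (n - 1) y) [^]\<^bsub>H\<^esub> bC n x y) (K (n - 1))"
  proof -
    have "bG (n - (p + 1)) (finprod Gm (\<lambda>y. \<omega> (n - 1) y [^]\<^bsub>Gm\<^esub> bC n x y) (K (n - 1))) =
        finprod H (\<lambda>y. bG (n - (p + 1)) (\<omega> (n - 1) y [^]\<^bsub>Gm\<^esub> bC n x y)) (K (n - 1))"
      using \<omega>_y by (intro hom_finprod Gm.comm_group_axioms H.comm_group_axioms d.homh finite_K) auto
    also have "\<dots> = finprod H (\<lambda>y. bG (n - (p + 1)) (\<omega> (n - 1) y) [^]\<^bsub>H\<^esub> bC n x y) (K (n - 1))"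
      using \<omega>_y by (intro H.finprod_cong') (auto simp: d.hom_int_pow Pi_iff)
    finally show ?thesis .
  qed
  ultimately show ?thesis
    unfolding cobdry_apply[OF x Gm_def] H_def[symmetric] using bG_\<omega>_x \<omega>_y
    by (simp add: d.hom_mult Pi_iff)
qed

lemma finprod_cobdry_int_pow:
  assumes \<omega>: "\<omega> \<in> cochains K G p" and x: "x \<in> K n"
  shows "finprod (G (n - (p + 2))) (\<lambda>y. cobdry K bC G bG p \<omega> (n - 1) y [^]\<^bsub>G (n - (p + 2))\<^esub> bC n x y) (K (n - 1)) =
    finprod (G (n - (p + 2))) (\<lambda>y. bG (n - (p + 1)) (\<omega> (n - 1) y) [^]\<^bsub>G (n - (p + 2))\<^esub> bC n x y) (K (n - 1))
      [^]\<^bsub>G (n - (p + 2))\<^esub> cobdry_sign p"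
proof -
  define H where "H = G (n - (p + 2))"
  interpret H: comm_group H unfolding H_def by (rule comm_group_G)
  define e where "e = cobdry_sign p"
  define B where "B y = bG (n - (p + 1)) (\<omega> (n - 1) y)" for y
  have \<omega>_z: "\<omega> (n - 2) z \<in> carrier H" if "z \<in> K (n - 2)" for z
    unfolding H_def by (rule cochains_apply_in'[OF \<omega> that]) simp
  have B_in: "B y \<in> carrier H" if "y \<in> K (n - 1)" for y
    unfolding B_def H_def by (rule bG_in[OF cochains_apply_in'[OF \<omega> that]]) simp_all
  have cobdry_y: "cobdry K bC G bG p \<omega> (n - 1) y =
      finprod H (\<lambda>z. \<omega> (n - 2) z [^]\<^bsub>H\<^esub> bC (n - 1) y z) (K (n - 2)) \<otimes>\<^bsub>H\<^esub> B y [^]\<^bsub>H\<^esub> e"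
    if y: "y \<in> K (n - 1)" for y
    using cobdry_apply[OF y, of H p \<omega>] unfolding B_def e_def H_def by (simp add: algebra_simps)
  have "finprod H (\<lambda>y. cobdry K bC G bG p \<omega> (n - 1) y [^]\<^bsub>H\<^esub> bC n x y) (K (n - 1)) =
      finprod H (\<lambda>y. finprod H (\<lambda>z. \<omega> (n - 2) z [^]\<^bsub>H\<^esub> (bC (n - 1) y z * bC n x y)) (K (n - 2))
        \<otimes>\<^bsub>H\<^esub> (B y [^]\<^bsub>H\<^esub> bC n x y) [^]\<^bsub>H\<^esub> e) (K (n - 1))"
  proof (intro H.finprod_cong')
    fix y assume y: "y \<in> K (n - 1)"
    have "finprod H (\<lambda>z. \<omega> (n - 2) z [^]\<^bsub>H\<^esub> bC (n - 1) y z) (K (n - 2)) [^]\<^bsub>H\<^esub> bC n x y =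
        finprod H (\<lambda>z. \<omega> (n - 2) z [^]\<^bsub>H\<^esub> (bC (n - 1) y z * bC n x y)) (K (n - 2))"
      using \<omega>_z
      by (simp add: H.finprod_int_pow finite_K Pi_iff) (intro H.finprod_cong', auto simp: H.int_pow_pow)
    then show "cobdry K bC G bG p \<omega> (n - 1) y [^]\<^bsub>H\<^esub> bC n x y =
        finprod H (\<lambda>z. \<omega> (n - 2) z [^]\<^bsub>H\<^esub> (bC (n - 1) y z * bC n x y)) (K (n - 2))
          \<otimes>\<^bsub>H\<^esub> (B y [^]\<^bsub>H\<^esub> bC n x y) [^]\<^bsub>H\<^esub> e"
      using \<omega>_z B_in[OF y] unfolding cobdry_y[OF y]
      by (simp add: H.int_pow_distrib Pi_iff H.int_pow_pow mult.commute)
  qed (use \<omega>_z B_in in \<open>auto simp: Pi_iff\<close>)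
  also have "\<dots> = finprod H (\<lambda>z. \<omega> (n - 2) z [^]\<^bsub>H\<^esub> (\<Sum>y\<in>K (n - 1). bC (n - 1) y z * bC n x y)) (K (n - 2))
      \<otimes>\<^bsub>H\<^esub> finprod H (\<lambda>y. B y [^]\<^bsub>H\<^esub> bC n x y) (K (n - 1)) [^]\<^bsub>H\<^esub> e"
    using \<omega>_z B_in by (simp add: H.finprod_finprod_int_pow finite_K H.finprod_int_pow Pi_iff)
  also have "\<dots> = finprod H (\<lambda>y. B y [^]\<^bsub>H\<^esub> bC n x y) (K (n - 1)) [^]\<^bsub>H\<^esub> e"
    using C_chain[OF x] B_in by (simp add: mult.commute H.finprod_one_eqI Pi_iff)
  finally show ?thesis by (simp only: H_def B_def e_def)
qed

lemma cobdry_cobdry: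
  assumes \<omega>: "\<omega> \<in> cochains K G p"
  shows "cobdry K bC G bG (p + 1) (cobdry K bC G bG p \<omega>) = cochain_zero K G (p + 2)"
proof (rule cochains_eqI)
  show "cobdry K bC G bG (p + 1) (cobdry K bC G bG p \<omega>) \<in> cochains K G (p + 2)"
    using cobdry_in_cochains[OF cobdry_in_cochains[OF \<omega>]] by (simp add: add.assoc)
  fix n x assume x: "x \<in> K n"
  define H where "H = G (n - (p + 2))"
  interpret H: comm_group H unfolding H_def by (rule comm_group_G)
  define P where "P = finprod H (\<lambda>y. bG (n - (p + 1)) (\<omega> (n - 1) y) [^]\<^bsub>H\<^esub> bC n x y) (K (n - 1))"
  have "bG (n - (p + 1)) (\<omega> (n - 1) y) \<in> carrier H" if "y \<in> K (n - 1)" for y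
    unfolding H_def by (rule bG_in[OF cochains_apply_in'[OF \<omega> that]]) simp_all
  then have P_in: "P \<in> carrier H" unfolding P_def by (auto intro!: H.finprod_closed)
  have "cobdry K bC G bG (p + 1) (cobdry K bC G bG p \<omega>) n x =
      P [^]\<^bsub>H\<^esub> cobdry_sign p \<otimes>\<^bsub>H\<^esub> P [^]\<^bsub>H\<^esub> (- cobdry_sign p)"
  proof -
    have H: "H = G (n - (p + 1 + 1))" unfolding H_def by (simp add: algebra_simps)
    show ?thesis
      using finprod_cobdry_int_pow[OF \<omega> x, folded H_def] bG_cobdry_apply[OF \<omega> x, folded H_def]
      unfolding cobdry_apply[OF x H] P_def by simp
  qed
  also have "\<dots> = \<one>\<^bsub>H\<^esub>" using P_in by (simp add: H.int_pow_mult[symmetric])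
  finally show "cobdry K bC G bG (p + 1) (cobdry K bC G bG p \<omega>) n x = cochain_zero K G (p + 2) n x"
    using cochain_zero_apply[OF x] unfolding H_def by simp
qed (rule cochain_zero_in_cochains)

end

definition cobdry_transpose :: "(int \<Rightarrow> 'k set) \<Rightarrow> (int \<Rightarrow> 'k \<Rightarrow> 'k \<Rightarrow> int)
    \<Rightarrow> (int \<Rightarrow> ('g, 'm) monoid_scheme) \<Rightarrow> (int \<Rightarrow> 'g \<Rightarrow> 'g) \<Rightarrow> int
    \<Rightarrow> (int \<Rightarrow> 'k \<Rightarrow> 'g \<Rightarrow> complex) \<Rightarrow> (int \<Rightarrow> 'k \<Rightarrow> 'g \<Rightarrow> complex)" where
  "cobdry_transpose K bC G bG p \<nu> = (\<lambda>m. \<lambda>y\<in>K m. \<lambda>g\<in>carrier (G (m - p)).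
     (\<Prod>x\<in>K (m + 1). \<nu> (m + 1) x g powi bC (m + 1) x y)
       * \<nu> m y (bG (m - p) g) powi cobdry_sign p)"

context chain_complex_data
begin

lemma cobdry_transpose_in_hom_low:
  assumes \<nu>: "\<nu> \<in> hom_low K G (p + 1)"
  shows "cobdry_transpose K bC G bG p \<nu> \<in> hom_low K G p"
proof (rule hom_lowI)
  fix m y assume y: "y \<in> K m"
  define e where "e = cobdry_sign p"
  have \<nu>_up: "\<nu> (m + 1) x \<in> characters (G (m - p))" if "x \<in> K (m + 1)" for x
    using hom_low_apply_in[OF \<nu> that] by simp
  have \<nu>_y: "\<nu> m y \<in> characters (G (m - p - 1))"
    using hom_low_apply_in[OF \<nu> y] by (simp add: algebra_simps)
  define \<chi> where "\<chi> g = (\<Prod>x\<in>K (m + 1). \<nu> (m + 1) x g powi bC (m + 1) x y) * \<nu> m y (bG (m - p) g) powi e" for g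
  have "cmod (\<chi> g) = 1" if g: "g \<in> carrier (G (m - p))" for g
    unfolding \<chi>_def using characters_norm[OF \<nu>_up g] characters_norm[OF \<nu>_y bG_in[OF g refl]]
    by (simp add: norm_mult norm_power_int prod_norm[symmetric])
  moreover have "\<chi> (a \<otimes>\<^bsub>G (m - p)\<^esub> b) = \<chi> a * \<chi> b"
    if a: "a \<in> carrier (G (m - p))" and b: "b \<in> carrier (G (m - p))" for a b
    unfolding \<chi>_def bG_mult[OF a b]
    by (simp add: characters_mult[OF \<nu>_up a b] characters_mult[OF \<nu>_y bG_in[OF a refl] bG_in[OF b refl]]
        power_int_mult_distrib prod.distrib mult_ac)
  ultimately have "(\<lambda>g\<in>carrier (G (m - p)). \<chi> g) \<in> characters (G (m - p))"
    unfolding characters_def hom_def U1_def by (auto simp: monoid.m_closed[OF group.is_monoid[OF group_G]])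
  then show "cobdry_transpose K bC G bG p \<nu> m y \<in> characters (G (m - p))"
    unfolding cobdry_transpose_def \<chi>_def e_def using y by simp
qed (simp add: cobdry_transpose_def)

lemma characters_apply_cobdry:
  assumes \<chi>: "\<chi> \<in> characters (G (n - (p + 1)))" and \<omega>: "\<omega> \<in> cochains K G p" and x: "x \<in> K n"
  shows "\<chi> (cobdry K bC G bG p \<omega> n x) =
    (\<Prod>y\<in>K (n - 1). \<chi> (\<omega> (n - 1) y) powi bC n x y) * \<chi> (bG (n - p) (\<omega> n x)) powi cobdry_sign p"
proof -
  define H where "H = G (n - (p + 1))"
  interpret H: comm_group H unfolding H_def by (rule comm_group_G)
  have \<omega>_y: "\<omega> (n - 1) y \<in> carrier H" if "y \<in> K (n - 1)" for y
    unfolding H_def by (rule cochains_apply_in'[OF \<omega> that]) simp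
  have bG_x: "bG (n - p) (\<omega> n x) \<in> carrier H"
    unfolding H_def by (rule bG_in[OF cochains_apply_in[OF \<omega> x]]) simp
  show ?thesis
    unfolding cobdry_apply[OF x H_def] using \<chi>[folded H_def] \<omega>_y bG_x
    by (simp add: characters_mult characters_finprod[OF H.comm_group_axioms _ finite_K]
        characters_int_pow[OF H.is_group] Pi_iff)
qed

lemma pairing_cobdry_transpose:
  assumes \<nu>: "\<nu> \<in> hom_low K G (p + 1)" and \<omega>: "\<omega> \<in> cochains K G p"
  shows "pairing K (cobdry_transpose K bC G bG p \<nu>) \<omega> = pairing K \<nu> (cobdry K bC G bG p \<omega>)"
proof -
  define S where "S = {n. K n \<noteq> {}}"
  define F where "F n x y = \<nu> n x (\<omega> (n - 1) y) powi bC n x y" for n x y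
  define E where "E n x = \<nu> n x (bG (n - p) (\<omega> n x)) powi cobdry_sign p" for n x
  define T where "T n = (\<Prod>x\<in>K n. \<Prod>y\<in>K (n - 1). F n x y)" for n
  have "cobdry_transpose K bC G bG p \<nu> m y (\<omega> m y) = (\<Prod>x\<in>K (m + 1). F (m + 1) x y) * E m y"
    if y: "y \<in> K m" for m y
    unfolding cobdry_transpose_def F_def E_def using y cochains_apply_in[OF \<omega> y] by simp
  then have "pairing K (cobdry_transpose K bC G bG p \<nu>) \<omega> =
      (\<Prod>m\<in>S. \<Prod>y\<in>K m. \<Prod>x\<in>K (m + 1). F (m + 1) x y) * (\<Prod>m\<in>S. \<Prod>y\<in>K m. E m y)"
    unfolding pairing_def S_def[symmetric] by (simp add: prod.distrib)
  also have "(\<Prod>m\<in>S. \<Prod>y\<in>K m. \<Prod>x\<in>K (m + 1). F (m + 1) x y) = (\<Prod>m\<in>S. T (m + 1))"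
    unfolding T_def by (simp add: prod.swap[of _ "K (m + 1)" for m])
  also have "\<dots> = (\<Prod>n\<in>S. T n)"
    using finite_support unfolding S_def[symmetric] by (intro prod_shift_support) (auto simp: T_def S_def)
  also have "(\<Prod>n\<in>S. T n) * (\<Prod>m\<in>S. \<Prod>y\<in>K m. E m y) = pairing K \<nu> (cobdry K bC G bG p \<omega>)"
    unfolding pairing_def S_def[symmetric] T_def F_def E_def
    by (simp add: characters_apply_cobdry[OF hom_low_apply_in[OF \<nu>] \<omega>] prod.distrib)
  finally show ?thesis .
qed

lemma bdry_eq_cobdry_transpose:
  assumes \<nu>: "\<nu> \<in> hom_low K G (p + 1)"
  shows "bdry K bC G bG p \<nu> = cobdry_transpose K bC G bG p \<nu>"
  unfolding bdry_def
proof (rule the_equality)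
  show "cobdry_transpose K bC G bG p \<nu> \<in> hom_low K G p \<and>
      (\<forall>\<omega>\<in>cochains K G p. pairing K (cobdry_transpose K bC G bG p \<nu>) \<omega> = pairing K \<nu> (cobdry K bC G bG p \<omega>))"
    using cobdry_transpose_in_hom_low[OF \<nu>] pairing_cobdry_transpose[OF \<nu>] by blast
next
  interpret perfect_pairing "cochain_group K G p" "hom_low_group K G p" "\<lambda>\<omega> \<rho>. pairing K \<rho> \<omega>"
    by (rule perfect_pairing_cochains)
  fix \<rho> assume "\<rho> \<in> hom_low K G p \<and>
      (\<forall>\<omega>\<in>cochains K G p. pairing K \<rho> \<omega> = pairing K \<nu> (cobdry K bC G bG p \<omega>))"
  then show "\<rho> = cobdry_transpose K bC G bG p \<nu>"
    using eq_if_pairing_eq_right[of \<rho> "cobdry_transpose K bC G bG p \<nu>"]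
      cobdry_transpose_in_hom_low[OF \<nu>] pairing_cobdry_transpose[OF \<nu>] by simp
qed

lemma pairing_bdry:
  "\<nu> \<in> hom_low K G (p + 1) \<Longrightarrow> \<omega> \<in> cochains K G p \<Longrightarrow>
    pairing K (bdry K bC G bG p \<nu>) \<omega> = pairing K \<nu> (cobdry K bC G bG p \<omega>)"
  using bdry_eq_cobdry_transpose pairing_cobdry_transpose by simp

end

section \<open>Fake-gauge and fake-holonomy operators\<close>

lemma op_mult_indicator_left:
  assumes "finite H"
  shows "op_mult H (\<lambda>a b. if a \<in> H \<and> a = b \<and> P a then 1 else 0) M =
    (\<lambda>a c. if a \<in> H \<and> P a then M a c else 0)"
proof (intro ext)
  fix a c
  have "op_mult H (\<lambda>a b. if a \<in> H \<and> a = b \<and> P a then 1 else 0) M a c =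
      (\<Sum>b\<in>H. if b = a then (if a \<in> H \<and> P a then M a c else 0) else 0)"
    unfolding op_mult_def by (intro sum.cong) auto
  then show "op_mult H (\<lambda>a b. if a \<in> H \<and> a = b \<and> P a then 1 else 0) M a c =
      (if a \<in> H \<and> P a then M a c else 0)" using assms by (simp add: sum.delta')
qed

lemma op_mult_indicator_right:
  assumes "finite H"
  shows "op_mult H M (\<lambda>a b. if a \<in> H \<and> a = b \<and> P a then 1 else 0) =
    (\<lambda>a c. if c \<in> H \<and> P c then M a c else 0)"
proof (intro ext)
  fix a c
  have "op_mult H M (\<lambda>a b. if a \<in> H \<and> a = b \<and> P a then 1 else 0) a c =
      (\<Sum>b\<in>H. if b = c then (if c \<in> H \<and> P c then M a c else 0) else 0)"
    unfolding op_mult_def by (intro sum.cong) auto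
  then show "op_mult H M (\<lambda>a b. if a \<in> H \<and> a = b \<and> P a then 1 else 0) a c =
      (if c \<in> H \<and> P c then M a c else 0)" using assms by (simp add: sum.delta')
qed

lemma op_mult_lincomb_left:
  "op_mult H (\<lambda>a b. c * (\<Sum>i\<in>I. f i * M i a b)) N = (\<lambda>a b. c * (\<Sum>i\<in>I. f i * op_mult H (M i) N a b))"
  unfolding op_mult_def
  by (intro ext) (simp add: sum_distrib_left sum_distrib_right mult.assoc sum.swap[of _ H])

lemma op_mult_lincomb_right:
  "op_mult H N (\<lambda>a b. c * (\<Sum>i\<in>I. f i * M i a b)) = (\<lambda>a b. c * (\<Sum>i\<in>I. f i * op_mult H N (M i) a b))"
  unfolding op_mult_def
  by (intro ext) (simp add: sum_distrib_left sum_distrib_right mult_ac sum.swap[of _ H])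

lemma op_adj_lincomb:
  "op_adj (\<lambda>a b. c * (\<Sum>i\<in>I. f i * M i a b)) = (\<lambda>a b. cnj c * (\<Sum>i\<in>I. cnj (f i) * op_adj (M i) a b))"
  unfolding op_adj_def by (simp add: cnj_sum)

context finite_cochain_data
begin

lemma shift_op_mult:
  assumes \<gamma>: "\<gamma> \<in> cochains K G 0" and \<gamma>': "\<gamma>' \<in> cochains K G 0"
  shows "op_mult (cochains K G 0) (shift_op K G \<gamma>) (shift_op K G \<gamma>') = shift_op K G (cochain_add K G 0 \<gamma> \<gamma>')"
proof (intro ext)
  fix a c
  interpret C: comm_group "cochain_group K G 0" by (rule comm_group_cochain_group)
  show "op_mult (cochains K G 0) (shift_op K G \<gamma>) (shift_op K G \<gamma>') a c =
      shift_op K G (cochain_add K G 0 \<gamma> \<gamma>') a c"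
  proof (cases "c \<in> cochains K G 0")
    case True
    have "op_mult (cochains K G 0) (shift_op K G \<gamma>) (shift_op K G \<gamma>') a c =
        (\<Sum>b\<in>cochains K G 0. if b = cochain_add K G 0 c \<gamma>' then shift_op K G \<gamma> a b else 0)"
      unfolding op_mult_def using True by (intro sum.cong refl) (auto simp: shift_op_def)
    also have "\<dots> = shift_op K G (cochain_add K G 0 \<gamma> \<gamma>') a c"
      using True \<gamma> \<gamma>' C.m_assoc[of c \<gamma>' \<gamma>] C.m_comm[of \<gamma>' \<gamma>]
      by (auto simp: sum.delta' finite_cochains shift_op_def cochain_add_in_cochains)
    finally show ?thesis .
  qed (simp add: op_mult_def shift_op_def)
qed

lemma op_adj_shift_op:
  assumes "\<gamma> \<in> cochains K G 0"
  shows "op_adj (shift_op K G \<gamma>) = shift_op K G (inv\<^bsub>cochain_group K G 0\<^esub> \<gamma>)"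
proof -
  interpret C: comm_group "cochain_group K G 0" by (rule comm_group_cochain_group)
  show ?thesis
    unfolding op_adj_def shift_op_def using assms C.inv_solve_right[of _ _ \<gamma>] by (intro ext) auto
qed

lemma shift_op_zero: "shift_op K G (cochain_zero K G 0) = op_id (cochains K G 0)"
proof -
  interpret C: comm_group "cochain_group K G 0" by (rule comm_group_cochain_group)
  show ?thesis unfolding shift_op_def op_id_def using C.r_one by (intro ext) auto
qed

end

context chain_complex_data
begin

lemma flux_op_eq:
  assumes \<omega>: "\<omega> \<in> cochains K G 1"
  shows "flux_op K bC G bG \<omega> = (\<lambda>a b. if a \<in> cochains K G 0 \<and> a = b \<and> cobdry K bC G bG 0 a = \<omega> then 1 else 0)"
proof (intro ext)
  fix a b
  interpret perfect_pairing "hom_low_group K G 1" "cochain_group K G 1" "\<lambda>\<rho> \<omega>. pairing K \<rho> \<omega>"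
    using perfect_pairing_swap[OF perfect_pairing_cochains] .
  show "flux_op K bC G bG \<omega> a b = (if a \<in> cochains K G 0 \<and> a = b \<and> cobdry K bC G bG 0 a = \<omega> then 1 else 0)"
  proof (cases "a \<in> cochains K G 0 \<and> a = b")
    case True
    have "(\<Sum>\<beta>\<in>hom_low K G 1. cnj (pairing K \<beta> \<omega>) * clock_op K G (bdry K bC G bG 0 \<beta>) a b) =
        (\<Sum>\<beta>\<in>hom_low K G 1. cnj (pairing K \<beta> \<omega>) * pairing K \<beta> (cobdry K bC G bG 0 a))"
      unfolding clock_op_def using True pairing_bdry[of _ 0] by (intro sum.cong refl) auto
    also have "\<dots> = (if \<omega> = cobdry K bC G bG 0 a then of_nat (card (hom_low K G 1)) else 0)"
    proof -
      have "cobdry K bC G bG 0 a \<in> cochains K G 1" using cobdry_in_cochains[of a 0] True by auto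
      then show ?thesis using orthogonality_left[of \<omega> "cobdry K bC G bG 0 a"] \<omega> by simp
    qed
    finally show ?thesis
      unfolding flux_op_def using True finite_hom_low hom_low_one_in_hom_low by (auto simp: card_gt_0_iff)
  qed (auto simp: flux_op_def clock_op_def)
qed

lemma op_adj_flux_op: "\<omega> \<in> cochains K G 1 \<Longrightarrow> op_adj (flux_op K bC G bG \<omega>) = flux_op K bC G bG \<omega>"
  unfolding op_adj_def by (intro ext) (auto simp: flux_op_eq)

lemma flux_op_mult:
  assumes "\<omega> \<in> cochains K G 1" "\<omega>' \<in> cochains K G 1"
  shows "op_mult (cochains K G 0) (flux_op K bC G bG \<omega>) (flux_op K bC G bG \<omega>') =
    (if \<omega> = \<omega>' then flux_op K bC G bG \<omega>' else op_zero)"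
proof (intro ext)
  fix a c
  show "op_mult (cochains K G 0) (flux_op K bC G bG \<omega>) (flux_op K bC G bG \<omega>') a c =
      (if \<omega> = \<omega>' then flux_op K bC G bG \<omega>' else op_zero) a c"
    unfolding flux_op_eq[OF assms(1)] op_mult_indicator_left[OF finite_cochains]
    by (cases "\<omega> = \<omega>'") (auto simp: flux_op_eq[OF assms(2)] op_zero_def)
qed

lemma sum_flux_op: "(\<lambda>a b. \<Sum>\<omega>\<in>cochains K G 1. flux_op K bC G bG \<omega> a b) = op_id (cochains K G 0)"
proof (intro ext)
  fix a b
  have "(\<Sum>\<omega>\<in>cochains K G 1. flux_op K bC G bG \<omega> a b) =
      (\<Sum>\<omega>\<in>cochains K G 1. if \<omega> = cobdry K bC G bG 0 a then (if a \<in> cochains K G 0 \<and> a = b then 1 else 0) else 0)"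
    by (intro sum.cong refl) (auto simp: flux_op_eq)
  also have "\<dots> = op_id (cochains K G 0) a b"
    using finite_cochains cobdry_in_cochains[of a 0] unfolding op_id_def by (auto simp: sum.delta')
  finally show "(\<Sum>\<omega>\<in>cochains K G 1. flux_op K bC G bG \<omega> a b) = op_id (cochains K G 0) a b" .
qed

lemma shift_op_flux_op_commute:
  assumes \<gamma>: "\<gamma> \<in> cochains K G 0" "cobdry K bC G bG 0 \<gamma> = cochain_zero K G 1" and \<omega>: "\<omega> \<in> cochains K G 1"
  shows "op_mult (cochains K G 0) (shift_op K G \<gamma>) (flux_op K bC G bG \<omega>) =
    op_mult (cochains K G 0) (flux_op K bC G bG \<omega>) (shift_op K G \<gamma>)"
proof -
  interpret C1: comm_group "cochain_group K G 1" by (rule comm_group_cochain_group)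
  have "cobdry K bC G bG 0 a = cobdry K bC G bG 0 c"
    if "c \<in> cochains K G 0" "a = cochain_add K G 0 c \<gamma>" for a c
    using that \<gamma> cobdry_cochain_add[of c 0 \<gamma>] cobdry_in_cochains[of c 0]
      C1.r_one[of "cobdry K bC G bG 0 c"] by simp
  then show ?thesis
    unfolding flux_op_eq[OF \<omega>] op_mult_indicator_left[OF finite_cochains]
      op_mult_indicator_right[OF finite_cochains]
    by (intro ext) (auto simp: shift_op_def)
qed

lemma cobdry_minus_1_in_cochains: "\<alpha> \<in> cochains K G (-1) \<Longrightarrow> cobdry K bC G bG (-1) \<alpha> \<in> cochains K G 0"
  using cobdry_in_cochains[of \<alpha> "-1"] by simp

lemma gauge_op_flux_op_commute:
  assumes "\<omega> \<in> cochains K G 1"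
  shows "op_mult (cochains K G 0) (gauge_op K bC G bG \<rho>) (flux_op K bC G bG \<omega>) =
    op_mult (cochains K G 0) (flux_op K bC G bG \<omega>) (gauge_op K bC G bG \<rho>)"
proof -
  have "op_mult (cochains K G 0) (shift_op K G (cobdry K bC G bG (-1) \<alpha>)) (flux_op K bC G bG \<omega>) =
      op_mult (cochains K G 0) (flux_op K bC G bG \<omega>) (shift_op K G (cobdry K bC G bG (-1) \<alpha>))"
    if "\<alpha> \<in> cochains K G (-1)" for \<alpha>
    using cobdry_cobdry[OF that] cobdry_minus_1_in_cochains[OF that]
    by (intro shift_op_flux_op_commute assms) simp_all
  then show ?thesis
    unfolding gauge_op_def op_mult_lincomb_left op_mult_lincomb_right by simp
qed

lemma op_adj_gauge_op:
  assumes \<rho>: "\<rho> \<in> hom_low K G (-1)"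
  shows "op_adj (gauge_op K bC G bG \<rho>) = gauge_op K bC G bG \<rho>"
proof -
  interpret C: comm_group "cochain_group K G (-1)" by (rule comm_group_cochain_group)
  interpret d: group_hom "cochain_group K G (-1)" "cochain_group K G 0" "cobdry K bC G bG (-1)"
    using group_hom_cobdry[of "-1"] by simp
  interpret perfect_pairing "cochain_group K G (-1)" "hom_low_group K G (-1)" "\<lambda>\<omega> \<rho>. pairing K \<rho> \<omega>"
    by (rule perfect_pairing_cochains)
  have "(\<Sum>\<alpha>\<in>cochains K G (-1). pairing K \<rho> \<alpha> * op_adj (shift_op K G (cobdry K bC G bG (-1) \<alpha>)) a b) =
      (\<Sum>\<alpha>\<in>cochains K G (-1). cnj (pairing K \<rho> \<alpha>) * shift_op K G (cobdry K bC G bG (-1) \<alpha>) a b)" for a b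
  proof -
    have "(\<Sum>\<alpha>\<in>cochains K G (-1). pairing K \<rho> \<alpha> * op_adj (shift_op K G (cobdry K bC G bG (-1) \<alpha>)) a b) =
        (\<Sum>\<alpha>\<in>cochains K G (-1). cnj (pairing K \<rho> (inv\<^bsub>cochain_group K G (-1)\<^esub> \<alpha>))
          * shift_op K G (cobdry K bC G bG (-1) (inv\<^bsub>cochain_group K G (-1)\<^esub> \<alpha>)) a b)"
      using \<rho> by (intro sum.cong refl)
        (simp add: op_adj_shift_op cobdry_minus_1_in_cochains pairing_inv_left d.hom_inv)
    also have "\<dots> = (\<Sum>\<alpha>\<in>cochains K G (-1). cnj (pairing K \<rho> \<alpha>) * shift_op K G (cobdry K bC G bG (-1) \<alpha>) a b)"
      using C.sum_carrier_inv[of "\<lambda>\<alpha>. cnj (pairing K \<rho> \<alpha>) * shift_op K G (cobdry K bC G bG (-1) \<alpha>) a b"]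
      by simp
    finally show ?thesis .
  qed
  then show ?thesis
    unfolding gauge_op_def op_adj_lincomb by simp
qed

lemma shift_op_mult_gauge_op:
  assumes \<beta>: "\<beta> \<in> cochains K G (-1)" and \<rho>: "\<rho> \<in> hom_low K G (-1)"
  shows "op_mult (cochains K G 0) (shift_op K G (cobdry K bC G bG (-1) \<beta>)) (gauge_op K bC G bG \<rho>) =
    (\<lambda>a b. pairing K \<rho> \<beta> * gauge_op K bC G bG \<rho> a b)"
proof -
  interpret C: comm_group "cochain_group K G (-1)" by (rule comm_group_cochain_group)
  interpret perfect_pairing "cochain_group K G (-1)" "hom_low_group K G (-1)" "\<lambda>\<omega> \<rho>. pairing K \<rho> \<omega>"
    by (rule perfect_pairing_cochains)
  let ?d = "cobdry K bC G bG (-1)"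
  define h where "h a b \<alpha> = cnj (pairing K \<rho> \<alpha>) * shift_op K G (?d \<alpha>) a b" for a b \<alpha>
  have "(\<Sum>\<alpha>\<in>cochains K G (-1). h a b \<alpha>) =
      (\<Sum>\<alpha>\<in>cochains K G (-1). cnj (pairing K \<rho> \<beta>) * (cnj (pairing K \<rho> \<alpha>) * shift_op K G (?d (cochain_add K G (-1) \<beta> \<alpha>)) a b))"
    for a b
    using C.sum_carrier_translate[of \<beta> "h a b"] \<beta> \<rho> char_left[of \<rho>]
    unfolding h_def char_on_def by (simp add: mult.assoc)
  then have "pairing K \<rho> \<beta> * (\<Sum>\<alpha>\<in>cochains K G (-1). h a b \<alpha>) =
      (\<Sum>\<alpha>\<in>cochains K G (-1). cnj (pairing K \<rho> \<alpha>) * shift_op K G (?d (cochain_add K G (-1) \<beta> \<alpha>)) a b)"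
    for a b
    using norm_pairing[OF \<rho> \<beta>] cnj_mult_self_if_norm_1
    by (simp add: sum_distrib_left mult.assoc[symmetric] mult.commute[of "pairing K \<rho> \<beta>"])
  moreover have "op_mult (cochains K G 0) (shift_op K G (?d \<beta>)) (shift_op K G (?d \<alpha>)) =
      shift_op K G (?d (cochain_add K G (-1) \<beta> \<alpha>))" if "\<alpha> \<in> cochains K G (-1)" for \<alpha>
    using shift_op_mult[OF cobdry_minus_1_in_cochains[OF \<beta>] cobdry_minus_1_in_cochains[OF that]]
      cobdry_cochain_add[OF \<beta> that] by simp
  ultimately show ?thesis
    unfolding gauge_op_def op_mult_lincomb_right h_def by (simp add: mult.left_commute)
qed

lemma gauge_op_mult:
  assumes \<rho>: "\<rho> \<in> hom_low K G (-1)" and \<rho>': "\<rho>' \<in> hom_low K G (-1)"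
  shows "op_mult (cochains K G 0) (gauge_op K bC G bG \<rho>) (gauge_op K bC G bG \<rho>') =
    (if \<rho> = \<rho>' then gauge_op K bC G bG \<rho>' else op_zero)"
proof (intro ext)
  fix a c
  interpret perfect_pairing "cochain_group K G (-1)" "hom_low_group K G (-1)" "\<lambda>\<omega> \<rho>. pairing K \<rho> \<omega>"
    by (rule perfect_pairing_cochains)
  define N :: complex where "N = of_nat (card (cochains K G (-1)))"
  have "N \<noteq> 0" unfolding N_def using card_cochains_pos by simp
  have "op_mult (cochains K G 0) (gauge_op K bC G bG \<rho>) (gauge_op K bC G bG \<rho>') a c =
      1 / N * (\<Sum>\<beta>\<in>cochains K G (-1). cnj (pairing K \<rho> \<beta>) * pairing K \<rho>' \<beta>) * gauge_op K bC G bG \<rho>' a c"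
    unfolding gauge_op_def[of K bC G bG \<rho>] op_mult_lincomb_left N_def
    by (simp add: shift_op_mult_gauge_op \<rho>' sum_distrib_right mult.assoc)
  also have "\<dots> = (if \<rho> = \<rho>' then gauge_op K bC G bG \<rho>' else op_zero) a c"
    using orthogonality_left[of \<rho> \<rho>'] \<rho> \<rho>' \<open>N \<noteq> 0\<close> unfolding N_def op_zero_def by simp
  finally show "op_mult (cochains K G 0) (gauge_op K bC G bG \<rho>) (gauge_op K bC G bG \<rho>') a c =
      (if \<rho> = \<rho>' then gauge_op K bC G bG \<rho>' else op_zero) a c" .
qed

lemma sum_gauge_op: "(\<lambda>a b. \<Sum>\<rho>\<in>hom_low K G (-1). gauge_op K bC G bG \<rho> a b) = op_id (cochains K G 0)"
proof (intro ext)
  fix a b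
  interpret P: perfect_pairing "cochain_group K G (-1)" "hom_low_group K G (-1)" "\<lambda>\<omega> \<rho>. pairing K \<rho> \<omega>"
    by (rule perfect_pairing_cochains)
  interpret swapped: perfect_pairing "hom_low_group K G (-1)" "cochain_group K G (-1)" "\<lambda>\<rho> \<omega>. pairing K \<rho> \<omega>"
    using perfect_pairing_swap[OF perfect_pairing_cochains] .
  define N :: complex where "N = of_nat (card (cochains K G (-1)))"
  have "N \<noteq> 0" unfolding N_def using card_cochains_pos by simp
  have sum_cnj: "(\<Sum>\<rho>\<in>hom_low K G (-1). cnj (pairing K \<rho> \<alpha>)) = (if \<alpha> = cochain_zero K G (-1) then N else 0)"
    if "\<alpha> \<in> cochains K G (-1)" for \<alpha>
    using arg_cong[OF swapped.sum_pairing_left[of \<alpha>], of cnj] P.card_carrier_eq that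
    unfolding N_def by (simp flip: cnj_sum)
  have "(\<Sum>\<rho>\<in>hom_low K G (-1). gauge_op K bC G bG \<rho> a b) =
      1 / N * (\<Sum>\<alpha>\<in>cochains K G (-1). (\<Sum>\<rho>\<in>hom_low K G (-1). cnj (pairing K \<rho> \<alpha>))
        * shift_op K G (cobdry K bC G bG (-1) \<alpha>) a b)"
    unfolding gauge_op_def N_def
    by (simp add: sum_distrib_left sum_distrib_right sum.swap[of _ "hom_low K G (-1)"] mult.assoc)
  also have "\<dots> = shift_op K G (cobdry K bC G bG (-1) (cochain_zero K G (-1))) a b"
    using \<open>N \<noteq> 0\<close> finite_cochains cochain_zero_in_cochains by (simp add: sum_cnj if_distrib if_distribR sum.delta' cong: if_cong)
  also have "\<dots> = op_id (cochains K G 0) a b"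
    using group_hom.hom_one[OF group_hom_cobdry[of "-1"]] shift_op_zero by simp
  finally show "(\<Sum>\<rho>\<in>hom_low K G (-1). gauge_op K bC G bG \<rho> a b) = op_id (cochains K G 0) a b" .
qed

end

theorem mainTheorem5:
  fixes K :: "int \<Rightarrow> 'k set" and bC :: "int \<Rightarrow> 'k \<Rightarrow> 'k \<Rightarrow> int"
    and G :: "int \<Rightarrow> ('g, 'm) monoid_scheme" and bG :: "int \<Rightarrow> 'g \<Rightarrow> 'g"
  assumes K_fin: "\<And>n. finite (K n)"
    and K_supp: "finite {n. K n \<noteq> {}}"
    and C_chain: "\<And>n x z. x \<in> K n \<Longrightarrow> z \<in> K (n - 2) \<Longrightarrow>
                   (\<Sum>y\<in>K (n - 1). bC n x y * bC (n - 1) y z) = 0"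
    and G_grp: "\<And>n. comm_group (G n)"
    and G_fin: "\<And>n. finite (carrier (G n))"
    and bG_hom: "\<And>n. bG n \<in> hom (G n) (G (n - 1))"
    and G_chain: "\<And>n g. g \<in> carrier (G n) \<Longrightarrow> bG (n - 1) (bG n g) = \<one>\<^bsub>G (n - 2)\<^esub>"
  shows
   "(\<forall>\<rho>\<in>hom_low K G (-1). \<forall>\<omega>\<in>cochains K G 1.
        op_mult (cochains K G 0) (gauge_op K bC G bG \<rho>) (flux_op K bC G bG \<omega>)
      = op_mult (cochains K G 0) (flux_op K bC G bG \<omega>) (gauge_op K bC G bG \<rho>))
  \<and> (\<forall>\<rho>\<in>hom_low K G (-1). op_adj (gauge_op K bC G bG \<rho>) = gauge_op K bC G bG \<rho>)
  \<and> (\<forall>\<omega>\<in>cochains K G 1. op_adj (flux_op K bC G bG \<omega>) = flux_op K bC G bG \<omega>)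
  \<and> (\<forall>\<rho>\<in>hom_low K G (-1). \<forall>\<rho>'\<in>hom_low K G (-1).
        op_mult (cochains K G 0) (gauge_op K bC G bG \<rho>) (gauge_op K bC G bG \<rho>')
      = (if \<rho> = \<rho>' then gauge_op K bC G bG \<rho>' else op_zero))
  \<and> (\<forall>\<omega>\<in>cochains K G 1. \<forall>\<omega>'\<in>cochains K G 1.
        op_mult (cochains K G 0) (flux_op K bC G bG \<omega>) (flux_op K bC G bG \<omega>')
      = (if \<omega> = \<omega>' then flux_op K bC G bG \<omega>' else op_zero))
  \<and> (\<lambda>a b. \<Sum>\<rho>\<in>hom_low K G (-1). gauge_op K bC G bG \<rho> a b) = op_id (cochains K G 0)
  \<and> (\<lambda>a b. \<Sum>\<omega>\<in>cochains K G 1. flux_op K bC G bG \<omega> a b) = op_id (cochains K G 0)"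
proof -
  interpret chain_complex_data K G bC bG
    by (intro chain_complex_data.intro finite_cochain_data.intro chain_complex_data_axioms.intro)
      (fact K_fin K_supp C_chain G_grp G_fin bG_hom G_chain)+
  show ?thesis
    using gauge_op_flux_op_commute op_adj_gauge_op op_adj_flux_op gauge_op_mult flux_op_mult
      sum_gauge_op sum_flux_op
    by blast
qed

end
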